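(* (Extended$^{6\text{-th}}$ P-B-W Theorem.) Let $(\mathcal L,[\,,\,])$ be a Lie algebra over a field $\mathbf{k}$ with basis $X=\{x_j\mid j\in J\}$ where $J$ is ordered, let $k\in\mathbf{k}$ be nonzero, and let $\hat A,\hat q,\hat x_j,R$ be as in the context, so that $\mathcal U=\hat A/R$ with $\bar q=\hat q+R$ is the enveloping$^{6\text{-th}}$ algebra of $\mathcal L$. Then the set of cosets consisting of $$\hat q\hat x_{j_1}\cdots\hat x_{j_m}+R,\qquad \hat x_{i_1}\cdots\hat x_{i_t}\hat x_{j_0}\hat q\hat x_{j_1}\cdots\hat x_{j_m}+R,\qquad \hat x_{j_1}\cdots\hat x_{j_m}+R,$$ where $x_{i_1},\dots,x_{i_t},x_{j_0},x_{j_1},\dots,x_{j_m}\in X$, $i_t\ge\cdots\ge i_1$, $j_m\ge\cdots\ge j_1\ge j_0$, and $t,m\in\mathbb Z_{\ge0}$, is a basis of $\mathcal U$.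
   Context: Let $\tilde q\notin X$, $V$ the vector space with basis $X\cup\{\tilde q\}$, $T(V)$ its tensor algebra, $I$ the ideal of $T(V)$ generated by $\tilde q\otimes\tilde q-\tilde q$ and $\tilde q\otimes a\otimes\tilde q-\tilde q\otimes a$ for $a\in T(V)$; $\hat A:=T(V)/I$, $\hat q:=\tilde q+I$, $\hat x_j:=x_j+I$, and $x\mapsto\hat x$ the linear extension $\mathcal L\to\hat A$ (injective). $R$ is the two-sided ideal of $\hat A$ generated by $\widehat{[x,y]}-\hat x\hat y+\hat y\hat x+\hat x\hat y\hat q-\hat y\hat x\hat q-k\hat x\hat q\hat y+k\hat y\hat q\hat x$ for $x,y\in\mathcal L$. (This $\hat A/R$, with $\bar q$ and $i(x)=\hat x+R$, is the universal object for Lie homomorphisms into invariant algebras $(A,q)=\{a\in A\mid qaq=qa\}$ equipped with the bracket $[a,b]_{6,k}=ab-ba-abq+baq+kaqb-kbqa$.) *)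

theory Defs
  imports "HOL-Library.Poly_Mapping"
begin

text \<open>The Lie algebra L with basis X = {x_j | j in J} is modelled as the free
  vector space on J, i.e. finitely supported functions J -> k.
  Letters of the alphabet X \<union> {q~}: Some j is x_j, None is q~.
  The tensor algebra T(V) is the free associative algebra on these letters:
  finitely supported functions from words to k.\<close>

type_synonym ('j,'k) lie = "'j \<Rightarrow>\<^sub>0 'k"
type_synonym ('j,'k) tens = "'j option list \<Rightarrow>\<^sub>0 'k"

definition lsmult :: "'k::field \<Rightarrow> ('j,'k) lie \<Rightarrow> ('j,'k) lie" where
  "lsmult c x = Poly_Mapping.map (\<lambda>a. c * a) x"

definition is_lie_bracket :: "(('j,'k::field) lie \<Rightarrow> ('j,'k) lie \<Rightarrow> ('j,'k) lie) \<Rightarrow> bool" where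
  "is_lie_bracket br \<longleftrightarrow>
     (\<forall>x y z. br (x + y) z = br x z + br y z) \<and>
     (\<forall>x y z. br x (y + z) = br x y + br x z) \<and>
     (\<forall>c x y. br (lsmult c x) y = lsmult c (br x y)) \<and>
     (\<forall>c x y. br x (lsmult c y) = lsmult c (br x y)) \<and>
     (\<forall>x. br x x = 0) \<and>
     (\<forall>x y z. br x (br y z) + br y (br z x) + br z (br x y) = 0)"

definition tmult :: "('j,'k::field) tens \<Rightarrow> ('j,'k) tens \<Rightarrow> ('j,'k) tens" (infixl "\<star>" 70) where
  "f \<star> g = (\<Sum>u\<in>Poly_Mapping.keys f. \<Sum>v\<in>Poly_Mapping.keys g. Poly_Mapping.single (u @ v) (Poly_Mapping.lookup f u * Poly_Mapping.lookup g v))"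

definition tsmult :: "'k::field \<Rightarrow> ('j,'k) tens \<Rightarrow> ('j,'k) tens" where
  "tsmult c f = Poly_Mapping.map (\<lambda>a. c * a) f"

definition wd :: "'j option list \<Rightarrow> ('j,'k::field) tens" where
  "wd w = Poly_Mapping.single w 1"

definition qt :: "('j,'k::field) tens" where
  "qt = wd [None]"

definition emb :: "('j,'k::field) lie \<Rightarrow> ('j,'k) tens" where
  "emb x = (\<Sum>j\<in>Poly_Mapping.keys x. Poly_Mapping.single [Some j] (Poly_Mapping.lookup x j))"

inductive_set ideal_gen :: "('j,'k::field) tens set \<Rightarrow> ('j,'k) tens set" for G where
  zero: "0 \<in> ideal_gen G"
| gen: "g \<in> G \<Longrightarrow> (a \<star> g) \<star> b \<in> ideal_gen G"
| add: "f \<in> ideal_gen G \<Longrightarrow> h \<in> ideal_gen G \<Longrightarrow> f + h \<in> ideal_gen G"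

text \<open>Generators of the ideal I of T(V) (so that A-hat = T(V)/I).\<close>
definition gens_I :: "('j,'k::field) tens set" where
  "gens_I = {qt \<star> qt - qt} \<union> {qt \<star> a \<star> qt - qt \<star> a | a. True}"

text \<open>Lifts to T(V) of the generators of R (with parameter k).\<close>
definition gens_R :: "(('j,'k::field) lie \<Rightarrow> ('j,'k) lie \<Rightarrow> ('j,'k) lie) \<Rightarrow> 'k \<Rightarrow> ('j,'k) tens set" where
  "gens_R br k = {emb (br x y) - emb x \<star> emb y + emb y \<star> emb x
                  + emb x \<star> emb y \<star> qt - emb y \<star> emb x \<star> qt
                  - tsmult k (emb x \<star> qt \<star> emb y) + tsmult k (emb y \<star> qt \<star> emb x) | x y. True}"

text \<open>Preimage in T(V) of R under T(V) -> A-hat; then U = A-hat/R = T(V)/(this ideal).\<close>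
definition ideal_U :: "(('j,'k::field) lie \<Rightarrow> ('j,'k) lie \<Rightarrow> ('j,'k) lie) \<Rightarrow> 'k \<Rightarrow> ('j,'k) tens set" where
  "ideal_U br k = ideal_gen (gens_I \<union> gens_R br k)"

definition pbw_words :: "'j::linorder option list set" where
  "pbw_words =
     {None # map Some js | js. sorted js}
   \<union> {map Some is @ [Some j0, None] @ map Some js | is j0 js. sorted is \<and> sorted (j0 # js)}
   \<union> {map Some js | js. sorted js}"

text \<open>The cosets w + N (w in W) form a basis of T(V)/N: spanning and linearly independent
  (independence of the family indexed by distinct words also gives injectivity w \<mapsto> coset).\<close>
definition cosets_basis :: "('j,'k::field) tens set \<Rightarrow> 'j option list set \<Rightarrow> bool" where
  "cosets_basis N W \<longleftrightarrow>
     (\<forall>f. \<exists>S c. finite S \<and> S \<subseteq> W \<and> f - (\<Sum>w\<in>S. tsmult (c w) (wd w)) \<in> N) \<and>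
     (\<forall>S c. finite S \<and> S \<subseteq> W \<and> (\<Sum>w\<in>S. tsmult (c w) (wd w)) \<in> N \<longrightarrow> (\<forall>w\<in>S. c w = 0))"

end

theory Submission
  imports Defs "HOL-Library.Multiset" "HOL-Library.Product_Plus"
begin

text \<open>Spanning: modulo the ideal a \<open>q\<close> may be deleted whenever another \<open>q\<close> precedes it, and
  the defining relation \<open>x y = [x,y] + y x + (x y - y x) q - k (x q y - y q x)\<close> rewrites an
  adjacent descent \<open>x\<^sub>i x\<^sub>j\<close> (\<open>i > j\<close>) into a word with fewer letters, the swapped word and
  words containing a \<open>q\<close>.  If a \<open>q\<close> already stands before or between the two letters, the
  \<open>q\<close>-terms collapse and, as \<open>k \<noteq> 0\<close>, the swap costs only a bracket term.  A well-founded
  order on words makes this rewriting terminate in combinations of PBW words.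

  Independence: let \<open>S\<close> be the symmetric algebra of \<open>L\<close> with the classical PBW representation
  of \<open>L\<close>, and \<open>S'\<close> the same for the bracket scaled by \<open>k\<^sup>-\<^sup>1\<close>.  Then \<open>T(V)\<close> acts on
  \<open>S' \<oplus> S \<oplus> (S \<otimes> S)\<close>, with \<open>q\<close> projecting onto \<open>S'\<close> and \<open>x\<close> acting by
  \<open>(a, b, F) \<mapsto> (x a, x b, (x \<otimes> 1) F + 1 \<otimes> x a)\<close>, and all generators of the ideal act by
  zero.  On \<open>(1, 1, 0)\<close> the \<open>q\<close>-free PBW words give distinct monomials in the second summand,
  the words \<open>x\<^sub>u x\<^sub>j q x\<^sub>v\<close> give \<open>x\<^sub>u \<otimes> x\<^sub>j x\<^sub>v\<close> plus terms of lower left degree in the third,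
  and the words \<open>q x\<^sub>v\<close> give distinct monomials in the first.  So the coefficients of a
  combination of PBW words lying in the ideal vanish, in this order.\<close>

section \<open>Finitely supported vectors over a field\<close>

abbreviation lookup where "lookup \<equiv> Poly_Mapping.lookup"
abbreviation keys where "keys \<equiv> Poly_Mapping.keys"
abbreviation single where "single \<equiv> Poly_Mapping.single"

abbreviation basis_vec :: "'a \<Rightarrow> 'a \<Rightarrow>\<^sub>0 'k::field" where "basis_vec s \<equiv> single s 1"

definition smult :: "'k::field \<Rightarrow> ('a \<Rightarrow>\<^sub>0 'k) \<Rightarrow> ('a \<Rightarrow>\<^sub>0 'k)" where
  "smult c f = Poly_Mapping.map (\<lambda>a. c * a) f"

lemma lookup_smult[simp]: "lookup (smult c f) x = c * lookup f x"
  unfolding smult_def by transfer (simp add: when_def)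

lemma smult_add: "smult c (f + g) = smult c f + smult c g"
  by (rule poly_mapping_eqI) (simp add: lookup_add algebra_simps)
lemma smult_add_left: "smult (c + d) f = smult c f + smult d f"
  by (rule poly_mapping_eqI) (simp add: lookup_add algebra_simps)
lemma smult_smult[simp]: "smult c (smult d f) = smult (c * d) f"
  by (rule poly_mapping_eqI) (simp add: algebra_simps)
lemma smult_one[simp]: "smult 1 f = f"
  by (rule poly_mapping_eqI) simp
lemma smult_zero_left[simp]: "smult 0 f = 0"
  by (rule poly_mapping_eqI) simp
lemma smult_zero[simp]: "smult c 0 = 0"
  by (rule poly_mapping_eqI) simp
lemma smult_diff: "smult c (f - g) = smult c f - smult c g"
  by (rule poly_mapping_eqI) (simp add: lookup_minus algebra_simps)
lemma smult_diff_left: "smult (c - d) f = smult c f - smult d f"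
  by (rule poly_mapping_eqI) (simp add: lookup_minus algebra_simps)
lemma smult_sum: "smult c (sum g A) = (\<Sum>i\<in>A. smult c (g i))"
  by (induction A rule: infinite_finite_induct) (auto simp: smult_add)
lemma smult_single[simp]: "smult c (single x d) = single x (c * d)"
  by (rule poly_mapping_eqI) (simp add: lookup_single when_def)
lemma smult_minus_one: "smult (-1) f = - f"
  by (rule poly_mapping_eqI) simp
lemma keys_smult: "keys (smult c f) \<subseteq> keys f"
  by (auto simp: in_keys_iff)

lemma lsmult_eq_smult: "lsmult = smult"
  by (intro ext) (simp add: lsmult_def smult_def)
lemma tsmult_eq_smult: "tsmult = smult"
  by (intro ext) (simp add: tsmult_def smult_def)

lemma keys_sum_subset: "(\<And>i. i \<in> A \<Longrightarrow> keys (f i) \<subseteq> S) \<Longrightarrow> keys (sum f A) \<subseteq> S"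
  using keys_sum by fastforce
lemma keys_add_subset: "keys f \<subseteq> S \<Longrightarrow> keys g \<subseteq> S \<Longrightarrow> keys (f + g) \<subseteq> S"
  using keys_add[of f g] by blast
lemma keys_subset_of_diff:
  fixes f g :: "'a \<Rightarrow>\<^sub>0 'k::field"
  shows "keys (f - g) \<subseteq> S \<Longrightarrow> keys g \<subseteq> S \<Longrightarrow> keys f \<subseteq> S"
  using keys_add_subset[of "f - g" S g] by simp
lemma keys_smult_subset: "keys f \<subseteq> S \<Longrightarrow> keys (smult c f) \<subseteq> S"
  using keys_smult[of c f] by blast

definition lin_ext :: "('a \<Rightarrow> 'b \<Rightarrow>\<^sub>0 'k::field) \<Rightarrow> ('a \<Rightarrow>\<^sub>0 'k) \<Rightarrow> 'b \<Rightarrow>\<^sub>0 'k" where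
  "lin_ext g x = (\<Sum>i\<in>keys x. smult (lookup x i) (g i))"

lemma lin_ext_cong[fundef_cong]:
  "x = y \<Longrightarrow> (\<And>i. i \<in> keys y \<Longrightarrow> g i = h i) \<Longrightarrow> lin_ext g x = lin_ext h y"
  by (simp add: lin_ext_def)

lemma lin_ext_superset:
  "finite A \<Longrightarrow> keys x \<subseteq> A \<Longrightarrow> lin_ext g x = (\<Sum>i\<in>A. smult (lookup x i) (g i))"
  unfolding lin_ext_def by (rule sum.mono_neutral_left) (auto simp: in_keys_iff)

lemma lin_ext_0[simp]: "lin_ext g 0 = 0"
  by (simp add: lin_ext_def)

lemma lin_ext_add: "lin_ext g (x + y) = lin_ext g x + lin_ext g y"
proof -
  let ?A = "keys x \<union> keys y"
  have "lin_ext g (x + y) = (\<Sum>i\<in>?A. smult (lookup (x + y) i) (g i))"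
    by (rule lin_ext_superset) (auto simp: keys_add)
  also have "\<dots> = (\<Sum>i\<in>?A. smult (lookup x i) (g i)) + (\<Sum>i\<in>?A. smult (lookup y i) (g i))"
    by (simp add: lookup_add smult_add_left sum.distrib)
  also have "\<dots> = lin_ext g x + lin_ext g y"
    by (simp add: lin_ext_superset[of ?A x] lin_ext_superset[of ?A y])
  finally show ?thesis .
qed

lemma lin_ext_smult: "lin_ext g (smult c x) = smult c (lin_ext g x)"
  by (subst lin_ext_superset[OF finite_keys keys_smult]) (simp add: lin_ext_def smult_sum)

lemma lin_ext_minus: "lin_ext g (- x) = - lin_ext g x"
  using lin_ext_smult[of g "-1" x] by (simp add: smult_minus_one)

lemma lin_ext_diff: "lin_ext g (x - y) = lin_ext g x - lin_ext g y"
  using lin_ext_add[of g x "- y"] lin_ext_minus[of g y] by simp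

lemma lin_ext_sum: "lin_ext g (sum f A) = (\<Sum>a\<in>A. lin_ext g (f a))"
  by (induction A rule: infinite_finite_induct) (auto simp: lin_ext_add)

lemma lin_ext_single[simp]: "lin_ext g (single i c) = smult c (g i)"
  by (cases "c = 0") (simp_all add: lin_ext_def)

lemma keys_lin_ext_subset: "(\<And>i. i \<in> keys x \<Longrightarrow> keys (g i) \<subseteq> S) \<Longrightarrow> keys (lin_ext g x) \<subseteq> S"
  unfolding lin_ext_def by (intro keys_sum_subset keys_smult_subset)

lemma lin_ext_basis_vec: "lin_ext basis_vec x = x"
proof (rule poly_mapping_eqI)
  fix j
  have "finite I \<Longrightarrow> lookup (\<Sum>i\<in>I. smult (lookup x i) (basis_vec i)) j =
      (if j \<in> I then lookup x j else 0)" for I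
    by (induction I rule: finite_induct) (auto simp: lookup_single lookup_add when_def)
  then show "lookup (lin_ext basis_vec x) j = lookup x j"
    by (simp add: lin_ext_def in_keys_iff)
qed

lemma sum_basis_expansion: "x = (\<Sum>j\<in>keys x. smult (lookup x j) (basis_vec j))"
  using lin_ext_basis_vec[of x] by (simp add: lin_ext_def)

definition pm_linear :: "(('a \<Rightarrow>\<^sub>0 'k::field) \<Rightarrow> ('b \<Rightarrow>\<^sub>0 'k)) \<Rightarrow> bool" where
  "pm_linear F \<longleftrightarrow> (\<forall>x y. F (x + y) = F x + F y) \<and> (\<forall>c x. F (smult c x) = smult c (F x))"

lemma pm_linear_lin_ext: "pm_linear (lin_ext g)"
  by (simp add: pm_linear_def lin_ext_add lin_ext_smult)

lemma pm_linear_add: "pm_linear F \<Longrightarrow> F (x + y) = F x + F y"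
  by (simp add: pm_linear_def)
lemma pm_linear_smult: "pm_linear F \<Longrightarrow> F (smult c x) = smult c (F x)"
  by (simp add: pm_linear_def)
lemma pm_linear_zero: "pm_linear F \<Longrightarrow> F 0 = 0"
  using pm_linear_smult[of F 0 0] by simp
lemma pm_linear_minus: "pm_linear F \<Longrightarrow> F (- x) = - F x"
  using pm_linear_smult[of F "-1" x] by (simp add: smult_minus_one)
lemma pm_linear_diff: "pm_linear F \<Longrightarrow> F (x - y) = F x - F y"
  using pm_linear_add[of F x "- y"] pm_linear_minus[of F y] by simp
lemma pm_linear_sum: "pm_linear F \<Longrightarrow> F (sum g A) = (\<Sum>a\<in>A. F (g a))"
  by (induction A rule: infinite_finite_induct) (auto simp: pm_linear_add pm_linear_zero)

lemma pm_linear_comp: "pm_linear F \<Longrightarrow> pm_linear G \<Longrightarrow> pm_linear (\<lambda>x. F (G x))"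
  by (simp add: pm_linear_def)
lemma pm_linear_diff_fun: "pm_linear F \<Longrightarrow> pm_linear G \<Longrightarrow> pm_linear (\<lambda>x. F x - G x)"
  by (simp add: pm_linear_def smult_diff)
lemma pm_linear_sum_fun: "(\<And>i. i \<in> A \<Longrightarrow> pm_linear (F i)) \<Longrightarrow> pm_linear (\<lambda>x. \<Sum>i\<in>A. F i x)"
  by (simp add: pm_linear_def smult_sum sum.distrib)
lemma pm_linear_smult_fun: "pm_linear F \<Longrightarrow> pm_linear (\<lambda>x. smult c (F x))"
  by (simp add: pm_linear_def smult_add mult.commute)

lemma pm_linear_comp_lin_ext: "pm_linear F \<Longrightarrow> F (lin_ext g x) = lin_ext (\<lambda>i. F (g i)) x"
  by (simp add: lin_ext_def pm_linear_sum pm_linear_smult)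

lemma pm_linear_eq_lin_ext: "pm_linear F \<Longrightarrow> F x = lin_ext (\<lambda>i. F (basis_vec i)) x"
  using pm_linear_comp_lin_ext[of F basis_vec x] lin_ext_basis_vec[of x] by simp

lemma pm_linear_eqI:
  assumes "pm_linear F" "pm_linear G" "\<And>i. i \<in> keys x \<Longrightarrow> F (basis_vec i) = G (basis_vec i)"
  shows "F x = G x"
proof -
  have "F x = lin_ext (\<lambda>i. F (basis_vec i)) x" by (rule pm_linear_eq_lin_ext[OF assms(1)])
  also have "\<dots> = lin_ext (\<lambda>i. G (basis_vec i)) x" by (rule lin_ext_cong) (use assms(3) in auto)
  also have "\<dots> = G x" by (rule pm_linear_eq_lin_ext[OF assms(2), symmetric])
  finally show ?thesis .
qed

lemma lin_ext_lin_ext: "lin_ext f (lin_ext g x) = lin_ext (\<lambda>i. lin_ext f (g i)) x"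
  by (rule pm_linear_comp_lin_ext[OF pm_linear_lin_ext])

lemma lin_ext_swap:
  "lin_ext (\<lambda>u. lin_ext (\<lambda>v. h u v) g) f = lin_ext (\<lambda>v. lin_ext (\<lambda>u. h u v) f) g"
  by (simp add: lin_ext_def smult_sum sum_distrib_left mult.commute sum.swap[of _ "keys f"])

lemma sum_smult_basis_vec_lookup:
  assumes "finite S" "w \<in> S"
  shows "lookup (\<Sum>w'\<in>S. smult (c w') (basis_vec w')) w = c w"
  using assms by (simp add: lookup_sum lookup_single when_def)

section \<open>The tensor algebra and its two-sided ideals\<close>

lemma tmult_lin_ext: "f \<star> g = lin_ext (\<lambda>u. lin_ext (\<lambda>v. wd (u @ v)) g) f"
  by (simp add: tmult_def lin_ext_def smult_sum wd_def mult.commute)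

lemma tmult_lin_ext': "f \<star> g = lin_ext (\<lambda>v. lin_ext (\<lambda>u. wd (u @ v)) f) g"
  unfolding tmult_lin_ext by (rule lin_ext_swap)

lemma pm_linear_tmult_left: "pm_linear (\<lambda>f. f \<star> g)"
  unfolding tmult_lin_ext by (rule pm_linear_lin_ext)
lemma pm_linear_tmult_right: "pm_linear (\<lambda>g. f \<star> g)"
  unfolding tmult_lin_ext' by (rule pm_linear_lin_ext)

lemma tmult_add_left: "(f + h) \<star> g = f \<star> g + h \<star> g"
  using pm_linear_add[OF pm_linear_tmult_left] .
lemma tmult_add_right: "g \<star> (f + h) = g \<star> f + g \<star> h"
  using pm_linear_add[OF pm_linear_tmult_right] .
lemma tmult_smult_left: "smult c f \<star> g = smult c (f \<star> g)"
  using pm_linear_smult[OF pm_linear_tmult_left] .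
lemma tmult_smult_right: "g \<star> smult c f = smult c (g \<star> f)"
  using pm_linear_smult[OF pm_linear_tmult_right] .
lemma tmult_diff_left: "(f - h) \<star> g = f \<star> g - h \<star> g"
  using pm_linear_diff[OF pm_linear_tmult_left] .
lemma tmult_diff_right: "g \<star> (f - h) = g \<star> f - g \<star> h"
  using pm_linear_diff[OF pm_linear_tmult_right] .

lemma wd_tmult_wd[simp]: "wd u \<star> wd v = wd (u @ v)"
  by (simp add: tmult_lin_ext wd_def)

lemma tmult_assoc: "(f \<star> g) \<star> h = f \<star> (g \<star> h)"
  by (simp add: tmult_lin_ext lin_ext_lin_ext wd_def)

lemma wd_Nil_tmult[simp]: "wd [] \<star> f = f"
  by (simp add: tmult_lin_ext' wd_def lin_ext_basis_vec)

lemma emb_lin_ext: "emb x = lin_ext (\<lambda>j. wd [Some j]) x"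
  by (simp add: emb_def lin_ext_def wd_def)

lemma lin_ext_wd: "lin_ext wd f = f"
  unfolding wd_def[abs_def] by (rule lin_ext_basis_vec)

lemma ideal_gen_smult: "f \<in> ideal_gen G \<Longrightarrow> smult c f \<in> ideal_gen G"
proof (induction rule: ideal_gen.induct)
  case zero then show ?case by (simp add: ideal_gen.zero)
next
  case (gen g a b) then show ?case
    using ideal_gen.gen[of g G "smult c a" b] by (simp add: tmult_smult_left)
next
  case (add f h) then show ?case by (simp add: smult_add ideal_gen.add)
qed

lemma ideal_gen_diff: "f \<in> ideal_gen G \<Longrightarrow> h \<in> ideal_gen G \<Longrightarrow> f - h \<in> ideal_gen G"
  using ideal_gen.add[OF _ ideal_gen_smult[of h G "-1"], of f] by (simp add: smult_minus_one)

section \<open>The PBW representation of a Lie algebra on its symmetric algebra\<close>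

text \<open>Monomials of the symmetric algebra are multisets over \<open>J\<close>.  \<open>rho br l s\<close> is \<open>x\<^sub>l\<close> acting
  on the monomial \<open>s\<close>: multiplication if \<open>l\<close> is below all letters of \<open>s\<close>, and otherwise, with
  \<open>m\<close> the least letter of \<open>s = m + t\<close>, \<open>x\<^sub>l \<cdot> s = x\<^sub>m \<cdot> (x\<^sub>l \<cdot> t) + [x\<^sub>l, x\<^sub>m] \<cdot> t\<close>.  The recursion is
  nested (\<open>x\<^sub>m\<close> acts on \<open>x\<^sub>l \<cdot> t - (l + t)\<close>, of degree at most \<open>|t|\<close>), hence the explicit fuel; the
  truncation to degree \<open>|t|\<close> lets the fuel be shown irrelevant before that degree bound is known.\<close>

definition br_basis :: "(('j,'k::field) lie \<Rightarrow> ('j,'k) lie \<Rightarrow> ('j,'k) lie) \<Rightarrow> 'j \<Rightarrow> 'j \<Rightarrow> ('j,'k) lie" where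
  "br_basis br l m = br (basis_vec l) (basis_vec m)"

definition trunc_deg :: "nat \<Rightarrow> ('j multiset \<Rightarrow>\<^sub>0 'k::field) \<Rightarrow> ('j multiset \<Rightarrow>\<^sub>0 'k)" where
  "trunc_deg n y = lin_ext (\<lambda>s. if size s \<le> n then basis_vec s else 0) y"

primrec rho_fuel ::
  "(('j::linorder,'k::field) lie \<Rightarrow> ('j,'k) lie \<Rightarrow> ('j,'k) lie) \<Rightarrow> nat \<Rightarrow> 'j \<Rightarrow> 'j multiset \<Rightarrow> ('j multiset \<Rightarrow>\<^sub>0 'k)"
where
  "rho_fuel br 0 l s = basis_vec (add_mset l s)"
| "rho_fuel br (Suc n) l s =
    (if \<forall>x\<in>#s. l \<le> x then basis_vec (add_mset l s)
     else basis_vec (add_mset l s)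
       + lin_ext (rho_fuel br n (Min_mset s))
           (trunc_deg (size s - 1) (rho_fuel br n l (s - {#Min_mset s#}) - basis_vec (add_mset l (s - {#Min_mset s#}))))
       + lin_ext (\<lambda>\<nu>. rho_fuel br n \<nu> (s - {#Min_mset s#})) (br_basis br l (Min_mset s)))"

definition rho ::
  "(('j::linorder,'k::field) lie \<Rightarrow> ('j,'k) lie \<Rightarrow> ('j,'k) lie) \<Rightarrow> 'j \<Rightarrow> 'j multiset \<Rightarrow> ('j multiset \<Rightarrow>\<^sub>0 'k)"
where "rho br l s = rho_fuel br (size s) l s"

lemma keys_trunc_deg: "keys (trunc_deg n y) \<subseteq> {s. size s \<le> n}"
  unfolding trunc_deg_def by (rule keys_lin_ext_subset) auto

lemma trunc_deg_id:
  assumes "\<And>s. s \<in> keys y \<Longrightarrow> size s \<le> n"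
  shows "trunc_deg n y = y"
proof -
  have "trunc_deg n y = lin_ext basis_vec y"
    unfolding trunc_deg_def by (rule lin_ext_cong) (use assms in auto)
  then show ?thesis by (simp add: lin_ext_basis_vec)
qed

lemma size_remove_Min_mset: "s \<noteq> {#} \<Longrightarrow> size s = Suc (size (s - {#Min_mset s#}))"
  by (metis Min_in_mset insert_DiffM size_add_mset)

lemma rho_fuel_Suc_eq: "size s \<le> n \<Longrightarrow> rho_fuel br (Suc n) l s = rho_fuel br n l s"
proof (induction n arbitrary: l s)
  case (Suc n)
  let ?m = "Min_mset s" let ?t = "s - {#?m#}"
  show ?case
  proof (cases "\<forall>x\<in>#s. l \<le> x")
    case False
    then have "s \<noteq> {#}" by auto
    then have st: "size ?t \<le> n" using Suc.prems size_remove_Min_mset[of s] by auto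
    have trunc: "lin_ext (rho_fuel br (Suc n) ?m) (trunc_deg (size s - 1) y)
        = lin_ext (rho_fuel br n ?m) (trunc_deg (size s - 1) y)" for y
      using keys_trunc_deg Suc.IH Suc.prems by (intro lin_ext_cong) fastforce+
    show ?thesis
      unfolding rho_fuel.simps(2)[of br "Suc n" l s] rho_fuel.simps(2)[of br n l s] if_not_P[OF False]
      by (simp only: Suc.IH[OF st] trunc)
  qed simp
qed simp

lemma rho_fuel_eq_rho: "size s \<le> n \<Longrightarrow> rho_fuel br n l s = rho br l s"
  by (induction n rule: dec_induct) (simp_all add: rho_def rho_fuel_Suc_eq del: rho_fuel.simps)

lemma rho_eq: "rho br l s = (if \<forall>x\<in>#s. l \<le> x then basis_vec (add_mset l s) else
     basis_vec (add_mset l s)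
     + lin_ext (rho br (Min_mset s))
         (trunc_deg (size s - 1) (rho br l (s - {#Min_mset s#}) - basis_vec (add_mset l (s - {#Min_mset s#}))))
     + lin_ext (\<lambda>\<nu>. rho br \<nu> (s - {#Min_mset s#})) (br_basis br l (Min_mset s)))"
proof (cases "\<forall>x\<in>#s. l \<le> x")
  case True then show ?thesis by (cases s) (auto simp: rho_def)
next
  case False
  let ?m = "Min_mset s" let ?t = "s - {#?m#}"
  have ss: "size s = Suc (size ?t)" using False by (intro size_remove_Min_mset) auto
  have trunc: "lin_ext (rho_fuel br (size ?t) ?m) (trunc_deg (size s - 1) y)
      = lin_ext (rho br ?m) (trunc_deg (size s - 1) y)" for y
    using keys_trunc_deg ss by (intro lin_ext_cong) (auto intro!: rho_fuel_eq_rho)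
  have "rho br l s = rho_fuel br (Suc (size ?t)) l s" by (simp only: rho_def ss)
  also have "\<dots> = basis_vec (add_mset l s)
      + lin_ext (rho_fuel br (size ?t) ?m)
          (trunc_deg (size s - 1) (rho_fuel br (size ?t) l ?t - basis_vec (add_mset l ?t)))
      + lin_ext (\<lambda>\<nu>. rho_fuel br (size ?t) \<nu> ?t) (br_basis br l ?m)"
    by (simp only: rho_fuel.simps(2) if_not_P[OF False])
  also have "\<dots> = basis_vec (add_mset l s)
      + lin_ext (rho br ?m) (trunc_deg (size s - 1) (rho br l ?t - basis_vec (add_mset l ?t)))
      + lin_ext (\<lambda>\<nu>. rho br \<nu> ?t) (br_basis br l ?m)"
    by (simp only: trunc rho_def[symmetric])
  finally show ?thesis by (simp only: if_not_P[OF False])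
qed

lemma rho_basic: "\<forall>x\<in>#s. l \<le> x \<Longrightarrow> rho br l s = basis_vec (add_mset l s)"
  by (subst rho_eq) simp

lemma keys_rho_diff: "keys (rho br l s - basis_vec (add_mset l s)) \<subseteq> {w. size w \<le> size s}"
proof (induction "size s" arbitrary: l s rule: less_induct)
  case less
  show ?case
  proof (cases "\<forall>x\<in>#s. l \<le> x")
    case True then show ?thesis by (simp add: rho_basic)
  next
    case False
    let ?m = "Min_mset s" let ?t = "s - {#?m#}"
    have ss: "size s = Suc (size ?t)" using False by (intro size_remove_Min_mset) auto
    have IH: "keys (rho br l' s') \<subseteq> {w. size w \<le> size s' + 1}" if "size s' < size s" for l' s'
      by (rule keys_subset_of_diff[OF subset_trans[OF less(1)[OF that, of l']]]) auto
    let ?D = "rho br l ?t - basis_vec (add_mset l ?t)"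
    have "keys (lin_ext (rho br ?m) (trunc_deg (size s - 1) ?D)) \<subseteq> {w. size w \<le> size s}"
    proof (rule keys_lin_ext_subset)
      fix w assume "w \<in> keys (trunc_deg (size s - 1) ?D)"
      then have w: "size w < size s" using keys_trunc_deg ss by fastforce
      then show "keys (rho br ?m w) \<subseteq> {w. size w \<le> size s}" using IH[OF w, of ?m] by auto
    qed
    moreover have "keys (lin_ext (\<lambda>\<nu>. rho br \<nu> ?t) (br_basis br l ?m)) \<subseteq> {w. size w \<le> size s}"
      by (rule keys_lin_ext_subset) (use IH[of ?t] ss in auto)
    moreover have "rho br l s - basis_vec (add_mset l s)
        = lin_ext (rho br ?m) (trunc_deg (size s - 1) ?D) + lin_ext (\<lambda>\<nu>. rho br \<nu> ?t) (br_basis br l ?m)"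
      by (subst rho_eq, subst if_not_P[OF False]) simp
    ultimately show ?thesis by (simp add: keys_add_subset)
  qed
qed

lemma keys_rho: "keys (rho br l s) \<subseteq> {w. size w \<le> Suc (size s)}"
  by (rule keys_subset_of_diff[OF subset_trans[OF keys_rho_diff]]) auto

definition rep_basis :: "(('j::linorder,'k::field) lie \<Rightarrow> ('j,'k) lie \<Rightarrow> ('j,'k) lie) \<Rightarrow> 'j \<Rightarrow> ('j multiset \<Rightarrow>\<^sub>0 'k) \<Rightarrow> ('j multiset \<Rightarrow>\<^sub>0 'k)" where
  "rep_basis br l y = lin_ext (rho br l) y"

definition rep :: "(('j::linorder,'k::field) lie \<Rightarrow> ('j,'k) lie \<Rightarrow> ('j,'k) lie) \<Rightarrow> ('j,'k) lie \<Rightarrow> ('j multiset \<Rightarrow>\<^sub>0 'k) \<Rightarrow> ('j multiset \<Rightarrow>\<^sub>0 'k)" where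
  "rep br x y = lin_ext (\<lambda>j. rep_basis br j y) x"

lemma rep_basis_basis_vec[simp]: "rep_basis br l (basis_vec s) = rho br l s"
  by (simp add: rep_basis_def)

lemma rep_basis_vec[simp]: "rep br (basis_vec l) y = rep_basis br l y"
  by (simp add: rep_def)

lemma pm_linear_rep_basis: "pm_linear (rep_basis br l)"
  unfolding rep_basis_def[abs_def] by (rule pm_linear_lin_ext)

lemma pm_linear_rep: "pm_linear (rep br x)"
  unfolding rep_def lin_ext_def by (intro pm_linear_sum_fun pm_linear_smult_fun pm_linear_rep_basis)

lemma rep_add_left: "rep br (x + x') y = rep br x y + rep br x' y"
  by (simp add: rep_def lin_ext_add)
lemma rep_smult_left: "rep br (smult c x) y = smult c (rep br x y)"
  by (simp add: rep_def lin_ext_smult)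
lemma rep_minus_left: "rep br (- x) y = - rep br x y"
  by (simp add: rep_def lin_ext_minus)
lemma rep_sum_left: "rep br (sum f A) y = (\<Sum>a\<in>A. rep br (f a) y)"
  by (simp add: rep_def lin_ext_sum)

lemma keys_rep: "keys y \<subseteq> {w. size w \<le> n} \<Longrightarrow> keys (rep br x y) \<subseteq> {w. size w \<le> Suc n}"
  unfolding rep_def rep_basis_def
  by (intro keys_lin_ext_subset) (use keys_rho in fastforce)

lemma keys_rep_less:
  assumes "keys y \<subseteq> {s. size s < n}" shows "keys (rep br x y) \<subseteq> {s. size s < Suc n}"
proof (cases n)
  case 0
  then have "y = 0" using assms by auto
  then show ?thesis by (simp add: pm_linear_zero[OF pm_linear_rep])
next
  case (Suc n')
  then have "keys y \<subseteq> {s. size s \<le> n'}" using assms by auto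
  from keys_rep[OF this, of br x] show ?thesis using Suc by auto
qed

lemma rho_recursion:
  assumes "\<not> (\<forall>x\<in>#s. l \<le> x)"
  shows "rho br l s = rep_basis br (Min_mset s) (rho br l (s - {#Min_mset s#}))
     + rep br (br_basis br l (Min_mset s)) (basis_vec (s - {#Min_mset s#}))"
proof -
  let ?m = "Min_mset s" let ?t = "s - {#?m#}"
  have ne: "s \<noteq> {#}" using assms by auto
  have ss: "size s = Suc (size ?t)" using size_remove_Min_mset[OF ne] .
  have tr: "trunc_deg (size s - 1) (rho br l ?t - basis_vec (add_mset l ?t)) = rho br l ?t - basis_vec (add_mset l ?t)"
    by (rule trunc_deg_id) (use keys_rho_diff[of br l ?t] ss in auto)
  obtain x where "x \<in># s" "x < l" using assms by (auto simp: not_le)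
  then have "?m \<le> l" by (meson Min_le finite_set_mset less_imp_le order_trans)
  then have "\<forall>x\<in>#add_mset l ?t. ?m \<le> x"
    by (auto dest: in_diffD)
  then have "rho br ?m (add_mset l ?t) = basis_vec (add_mset l s)"
    using ne by (simp add: rho_basic add_mset_commute[of ?m l])
  then have "lin_ext (rho br ?m) (rho br l ?t - basis_vec (add_mset l ?t))
      = rep_basis br ?m (rho br l ?t) - basis_vec (add_mset l s)"
    by (simp add: lin_ext_diff rep_basis_def)
  moreover have "lin_ext (\<lambda>\<nu>. rho br \<nu> ?t) (br_basis br l ?m) = rep br (br_basis br l ?m) (basis_vec ?t)"
    by (simp add: rep_def)
  ultimately show ?thesis by (subst rho_eq, subst if_not_P[OF assms]) (simp only: tr, simp)
qed

locale lie_algebra =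
  fixes br :: "('j::linorder,'k::field) lie \<Rightarrow> ('j,'k) lie \<Rightarrow> ('j,'k) lie"
  assumes is_lie_bracket: "is_lie_bracket br"
begin

lemma br_add_left: "br (x + y) w = br x w + br y w"
  using is_lie_bracket by (simp add: is_lie_bracket_def)
lemma br_add_right: "br w (x + y) = br w x + br w y"
  using is_lie_bracket by (simp add: is_lie_bracket_def)
lemma br_smult_left: "br (smult c x) y = smult c (br x y)"
  using is_lie_bracket by (simp add: is_lie_bracket_def lsmult_eq_smult)
lemma br_smult_right: "br x (smult c y) = smult c (br x y)"
  using is_lie_bracket by (simp add: is_lie_bracket_def lsmult_eq_smult)
lemma br_self: "br x x = 0"
  using is_lie_bracket by (simp add: is_lie_bracket_def)
lemma br_jacobi: "br x (br y w) + br y (br w x) + br w (br x y) = 0"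
  using is_lie_bracket by (simp add: is_lie_bracket_def)

lemma br_minus_right: "br y (- x) = - br y x"
  using br_smult_right[of y "-1" x] by (simp add: smult_minus_one)

lemma br_anticomm: "br y x = - br x y"
proof -
  have "0 = br (y + x) (y + x)" by (simp add: br_self)
  also have "\<dots> = br y x + br x y" by (simp only: br_add_left br_add_right) (simp add: br_self)
  finally show ?thesis by (metis eq_neg_iff_add_eq_0)
qed

lemma br_sum_left: "br (sum f A) y = (\<Sum>a\<in>A. br (f a) y)"
  by (induction A rule: infinite_finite_induct) (auto simp: br_add_left br_smult_left[of 0 0, simplified])
lemma br_sum_right: "br y (sum f A) = (\<Sum>a\<in>A. br y (f a))"
  by (induction A rule: infinite_finite_induct) (auto simp: br_add_right br_smult_right[of _ 0 0, simplified])

lemma br_basis_expansion: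
  "br x y = (\<Sum>j\<in>keys x. \<Sum>j'\<in>keys y. smult (lookup x j * lookup y j') (br_basis br j j'))"
proof -
  have "br x y = br (\<Sum>j\<in>keys x. smult (lookup x j) (basis_vec j)) (\<Sum>j'\<in>keys y. smult (lookup y j') (basis_vec j'))"
    using sum_basis_expansion[of x] sum_basis_expansion[of y] by simp
  also have "\<dots> = (\<Sum>j\<in>keys x. \<Sum>j'\<in>keys y. smult (lookup x j * lookup y j') (br_basis br j j'))"
    unfolding br_basis_def
    by (simp only: br_sum_left br_sum_right br_smult_left br_smult_right smult_smult smult_sum)
      (rule trans[OF sum.swap], simp add: mult.commute)
  finally show ?thesis .
qed

lemma br_basis_anticomm: "br_basis br m l = - br_basis br l m"
  by (simp add: br_basis_def br_anticomm[of "basis_vec l"])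

lemma br_right_derivation: "br (br a c) b + br a (br b c) = br (br a b) c"
proof -
  have "br (br a c) b = br b (br c a)"
    using br_anticomm[of b "br a c"] br_anticomm[of c a] br_minus_right[of b "br c a"] by simp
  moreover have "br (br a b) c = - br c (br a b)" by (rule br_anticomm)
  moreover have "br a (br b c) + br b (br c a) = - br c (br a b)"
    using br_jacobi[of a b c] by (simp add: eq_neg_iff_add_eq_0)
  ultimately show ?thesis by (simp add: add.commute)
qed

lemma rep_commutator_of_basis:
  assumes "\<And>s l m. s \<in> keys y \<Longrightarrow>
    rep_basis br l (rep_basis br m (basis_vec s)) - rep_basis br m (rep_basis br l (basis_vec s))
      = rep br (br_basis br l m) (basis_vec s)"
  shows "rep br x (rep br x' y) - rep br x' (rep br x y) = rep br (br x x') y"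
proof (rule pm_linear_eqI[where F = "\<lambda>y. rep br x (rep br x' y) - rep br x' (rep br x y)"])
  show "pm_linear (\<lambda>y. rep br x (rep br x' y) - rep br x' (rep br x y))"
    by (intro pm_linear_diff_fun pm_linear_comp[OF pm_linear_rep pm_linear_rep])
  show "pm_linear (rep br (br x x'))" by (rule pm_linear_rep)
  fix s assume s: "s \<in> keys y"
  let ?v = "basis_vec s :: _ \<Rightarrow>\<^sub>0 'k"
  have e1: "rep br x (rep br x' ?v) = (\<Sum>j\<in>keys x. \<Sum>j'\<in>keys x'.
      smult (lookup x j * lookup x' j') (rep_basis br j (rep_basis br j' ?v)))"
    by (simp add: rep_def lin_ext_def pm_linear_sum[OF pm_linear_rep_basis]
        pm_linear_smult[OF pm_linear_rep_basis] smult_sum)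
  have e2: "rep br x' (rep br x ?v) = (\<Sum>j\<in>keys x. \<Sum>j'\<in>keys x'.
      smult (lookup x j * lookup x' j') (rep_basis br j' (rep_basis br j ?v)))"
    by (simp add: rep_def lin_ext_def pm_linear_sum[OF pm_linear_rep_basis]
        pm_linear_smult[OF pm_linear_rep_basis] smult_sum sum.swap[of _ "keys x'"] mult.commute)
  have "rep br x (rep br x' ?v) - rep br x' (rep br x ?v) = (\<Sum>j\<in>keys x. \<Sum>j'\<in>keys x'.
      smult (lookup x j * lookup x' j') (rep_basis br j (rep_basis br j' ?v) - rep_basis br j' (rep_basis br j ?v)))"
    by (simp add: e1 e2 smult_diff sum_subtractf)
  also have "\<dots> = (\<Sum>j\<in>keys x. \<Sum>j'\<in>keys x'. smult (lookup x j * lookup x' j') (rep br (br_basis br j j') ?v))"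
    using assms[OF s] by simp
  also have "\<dots> = rep br (br x x') ?v"
    by (simp add: br_basis_expansion[of x x'] rep_sum_left rep_smult_left)
  finally show "rep br x (rep br x' ?v) - rep br x' (rep br x ?v) = rep br (br x x') ?v" .
qed

lemma rep_basis_swap:
  assumes "\<forall>x\<in>#s. m \<le> x" and "m < l"
  shows "rep_basis br l (rep_basis br m (basis_vec s))
    = rep_basis br m (rep_basis br l (basis_vec s)) + rep br (br_basis br l m) (basis_vec s)"
proof -
  have "Min_mset (add_mset m s) = m"
    using assms by (cases "s = {#}") (auto simp: min_def)
  moreover have "\<not> (\<forall>x\<in>#add_mset m s. l \<le> x)" using assms(2) by auto
  ultimately have "rho br l (add_mset m s) = rep_basis br m (rho br l s) + rep br (br_basis br l m) (basis_vec s)"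
    using rho_recursion[where s = "add_mset m s" and l = l] by simp
  then show ?thesis using rho_basic[OF assms(1), of br] by simp
qed

text \<open>The inductive step for \<open>x\<^sub>a x\<^sub>b\<close> on a monomial whose least letter \<open>n\<close> is smaller than
  both: move \<open>x\<^sub>n\<close> to the front, using the commutation relation on lower degree.\<close>

lemma rep_basis_swap_Min:
  assumes comm_lower: "\<And>x x' y. keys y \<subseteq> {w. size w < size s} \<Longrightarrow>
      rep br x (rep br x' y) - rep br x' (rep br x y) = rep br (br x x') y"
    and ne: "s \<noteq> {#}" and an: "Min_mset s < a" and bn: "Min_mset s < b"
  defines "n \<equiv> Min_mset s" and "t \<equiv> s - {#Min_mset s#}"
  shows "rep_basis br a (rep_basis br b (basis_vec s))
    = rep_basis br n (rep_basis br a (rep_basis br b (basis_vec t)))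
      + rep br (br_basis br a n) (rep_basis br b (basis_vec t))
      + rep_basis br a (rep br (br_basis br b n) (basis_vec t))"
proof -
  have st: "size t < size s" using size_remove_Min_mset[OF ne] by (simp add: t_def)
  have tn: "\<forall>x\<in>#t. n \<le> x" by (auto simp: t_def n_def dest: in_diffD)
  have zs: "basis_vec s = rep_basis br n (basis_vec t)"
    using rho_basic[OF tn, of br] ne by (simp add: n_def t_def)
  have b_step: "rep_basis br b (basis_vec s) = rep_basis br n (rep_basis br b (basis_vec t)) + rep br (br_basis br b n) (basis_vec t)"
    using rep_basis_swap[OF tn bn[folded n_def]] zs by simp
  let ?w = "rep_basis br b (basis_vec t)"
  let ?w' = "?w - basis_vec (add_mset b t)"
  have "keys ?w' \<subseteq> {w. size w < size s}" using keys_rho_diff[of br b t] st by auto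
  then have "rep_basis br a (rep_basis br n ?w') = rep_basis br n (rep_basis br a ?w') + rep br (br_basis br a n) ?w'"
    using comm_lower[of ?w' "basis_vec a" "basis_vec n"] by (simp add: br_basis_def diff_eq_eq add.commute)
  moreover have "rep_basis br a (rep_basis br n (basis_vec (add_mset b t)))
      = rep_basis br n (rep_basis br a (basis_vec (add_mset b t))) + rep br (br_basis br a n) (basis_vec (add_mset b t))"
    by (rule rep_basis_swap[OF _ an[folded n_def]]) (use tn bn n_def in auto)
  ultimately have "rep_basis br a (rep_basis br n ?w) = rep_basis br n (rep_basis br a ?w) + rep br (br_basis br a n) ?w"
    by (simp add: pm_linear_diff[OF pm_linear_rep_basis] pm_linear_diff[OF pm_linear_rep] algebra_simps)
  then show ?thesis using b_step by (simp add: pm_linear_add[OF pm_linear_rep_basis])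
qed

lemma rep_basis_commutator_Min_below:
  assumes comm_lower: "\<And>x x' y. keys y \<subseteq> {w. size w < size s} \<Longrightarrow>
      rep br x (rep br x' y) - rep br x' (rep br x y) = rep br (br x x') y"
    and "a \<in># s" "a < l" "a < m"
  shows "rep_basis br l (rep_basis br m (basis_vec s)) - rep_basis br m (rep_basis br l (basis_vec s))
    = rep br (br_basis br l m) (basis_vec s)"
proof -
  let ?n = "Min_mset s" let ?t = "s - {#?n#}"
  let ?zt = "basis_vec ?t :: _ \<Rightarrow>\<^sub>0 'k"
  have ne: "s \<noteq> {#}" and nl: "?n < l" and nm: "?n < m"
    using assms(2-4) by (auto intro: le_less_trans[OF Min_le[OF finite_set_mset]])
  have st: "size ?t < size s" using size_remove_Min_mset[OF ne] by simp
  have tn: "\<forall>x\<in>#?t. ?n \<le> x" by (auto dest: in_diffD)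
  have zs: "basis_vec s = rep_basis br ?n ?zt" using rho_basic[OF tn, of br] ne by simp
  have comm_t: "rep br x (rep br x' ?zt) - rep br x' (rep br x ?zt) = rep br (br x x') ?zt" for x x'
    by (rule comm_lower) (use st in auto)
  have "rep_basis br l (rep_basis br m (basis_vec s)) - rep_basis br m (rep_basis br l (basis_vec s)) =
      rep_basis br ?n (rep_basis br l (rep_basis br m ?zt) - rep_basis br m (rep_basis br l ?zt))
      + (rep br (br_basis br l ?n) (rep_basis br m ?zt) - rep_basis br m (rep br (br_basis br l ?n) ?zt))
      + (rep_basis br l (rep br (br_basis br m ?n) ?zt) - rep br (br_basis br m ?n) (rep_basis br l ?zt))"
    using rep_basis_swap_Min[OF comm_lower ne nl nm] rep_basis_swap_Min[OF comm_lower ne nm nl]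
    by (simp add: pm_linear_diff[OF pm_linear_rep_basis] algebra_simps)
  also have "\<dots> = rep_basis br ?n (rep br (br_basis br l m) ?zt)
      + rep br (br (br_basis br l ?n) (basis_vec m) + br (basis_vec l) (br_basis br m ?n)) ?zt"
    using comm_t[of "basis_vec l" "basis_vec m"] comm_t[of "br_basis br l ?n" "basis_vec m"]
      comm_t[of "basis_vec l" "br_basis br m ?n"]
    by (simp add: br_basis_def rep_add_left)
  also have "\<dots> = rep br (br_basis br l m) (basis_vec s)"
    using comm_t[of "br_basis br l m" "basis_vec ?n"] zs
      br_right_derivation[of "basis_vec l" "basis_vec ?n" "basis_vec m"]
    by (simp add: br_basis_def algebra_simps)
  finally show ?thesis .
qed

lemma rep_basis_commutator:
  "rep_basis br l (rep_basis br m (basis_vec s)) - rep_basis br m (rep_basis br l (basis_vec s))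
    = rep br (br_basis br l m) (basis_vec s)"
proof (induction "size s" arbitrary: l m s rule: less_induct)
  case less
  have comm_lower: "\<And>x x' y. keys y \<subseteq> {w. size w < size s} \<Longrightarrow>
      rep br x (rep br x' y) - rep br x' (rep br x y) = rep br (br x x') y"
    by (rule rep_commutator_of_basis) (use less in auto)
  consider "l = m" | "m < l" "\<forall>x\<in>#s. m \<le> x" | "l < m" "\<forall>x\<in>#s. l \<le> x"
    | a where "a \<in># s" "a < l" "a < m"
    by (metis linorder_cases not_le order.strict_trans order.strict_trans1)
  then show ?case
  proof cases
    case 1 then show ?thesis by (simp add: br_basis_def br_self rep_def)
  next
    case 2 then show ?thesis using rep_basis_swap[OF 2(2,1)] by simp
  next
    case 3 then show ?thesis
      using rep_basis_swap[OF 3(2,1)] by (simp add: br_basis_anticomm[of m l] rep_minus_left)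
  next
    case 4 show ?thesis by (rule rep_basis_commutator_Min_below[OF comm_lower 4])
  qed
qed

theorem rep_commutator: "rep br x (rep br x' y) - rep br x' (rep br x y) = rep br (br x x') y"
  by (rule rep_commutator_of_basis) (rule rep_basis_commutator)

end

section \<open>A module over the tensor algebra annihilated by the ideal\<close>

text \<open>Elements of \<open>S' \<oplus> S \<oplus> (S \<otimes> S)\<close> are triples.  The third component \<open>F\<close> is stored as the
  map from a monomial \<open>t\<close> of the right factor to its left coefficient, i.e. \<open>F = \<Sum>\<^sub>t F t \<otimes> t\<close>, so
  that \<open>map_left f\<close> is \<open>f \<otimes> 1\<close> and \<open>one_tensor v\<close> is \<open>1 \<otimes> v\<close>.\<close>

type_synonym ('j,'k) mod3 = "('j multiset \<Rightarrow>\<^sub>0 'k) \<times> ('j multiset \<Rightarrow>\<^sub>0 'k) \<times> ('j multiset \<Rightarrow>\<^sub>0 ('j multiset \<Rightarrow>\<^sub>0 'k))"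

definition smult_nested :: "'k::field \<Rightarrow> ('a \<Rightarrow>\<^sub>0 ('b \<Rightarrow>\<^sub>0 'k)) \<Rightarrow> ('a \<Rightarrow>\<^sub>0 ('b \<Rightarrow>\<^sub>0 'k))" where
  "smult_nested c F = Poly_Mapping.map (smult c) F"

lemma lookup_map_zero_preserving: "f 0 = 0 \<Longrightarrow> lookup (Poly_Mapping.map f F) t = f (lookup F t)"
  by transfer (simp add: when_def)

lemma lookup_smult_nested[simp]: "lookup (smult_nested c F) t = smult c (lookup F t)"
  by (simp add: smult_nested_def lookup_map_zero_preserving)

definition smult3 :: "'k::field \<Rightarrow> ('j,'k) mod3 \<Rightarrow> ('j,'k) mod3" where
  "smult3 c m = (smult c (fst m), smult c (fst (snd m)), smult_nested c (snd (snd m)))"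

lemma smult3_Pair[simp]: "smult3 c (a, b, F) = (smult c a, smult c b, smult_nested c F)"
  by (simp add: smult3_def)

lemma smult_nested_add: "smult_nested c (F + G) = smult_nested c F + smult_nested c G"
  by (rule poly_mapping_eqI) (simp add: lookup_add smult_add)
lemma smult_nested_add_left: "smult_nested (c + d) F = smult_nested c F + smult_nested d F"
  by (rule poly_mapping_eqI) (simp add: lookup_add smult_add_left)
lemma smult_nested_smult_nested[simp]: "smult_nested c (smult_nested d F) = smult_nested (c * d) F"
  by (rule poly_mapping_eqI) simp
lemma smult_nested_one[simp]: "smult_nested 1 F = F"
  by (rule poly_mapping_eqI) simp
lemma smult_nested_zero_left[simp]: "smult_nested 0 F = 0"
  by (rule poly_mapping_eqI) simp
lemma smult_nested_zero[simp]: "smult_nested c 0 = 0"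
  by (rule poly_mapping_eqI) simp

lemma smult3_add: "smult3 c (m + m') = smult3 c m + smult3 c m'"
  by (simp add: smult3_def smult_add smult_nested_add)
lemma smult3_add_left: "smult3 (c + d) m = smult3 c m + smult3 d m"
  by (simp add: smult3_def smult_add_left smult_nested_add_left)
lemma smult3_smult3[simp]: "smult3 c (smult3 d m) = smult3 (c * d) m"
  by (simp add: smult3_def)
lemma smult3_one[simp]: "smult3 1 m = m"
  by (simp add: smult3_def)
lemma smult3_zero_left[simp]: "smult3 0 m = 0"
  by (simp add: smult3_def zero_prod_def)
lemma smult3_zero[simp]: "smult3 c 0 = 0"
  by (simp add: smult3_def zero_prod_def)
lemma smult3_sum: "smult3 c (sum f A) = (\<Sum>a\<in>A. smult3 c (f a))"
  by (induction A rule: infinite_finite_induct) (auto simp: smult3_add)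
lemma smult3_minus_one: "smult3 (-1) m = - m"
  by (cases m) (simp add: smult3_def smult_minus_one, rule poly_mapping_eqI, simp add: smult_minus_one)

definition pm_linear3 :: "(('j,'k::field) mod3 \<Rightarrow> ('j,'k) mod3) \<Rightarrow> bool" where
  "pm_linear3 F \<longleftrightarrow> (\<forall>x y. F (x + y) = F x + F y) \<and> (\<forall>c x. F (smult3 c x) = smult3 c (F x))"

lemma pm_linear3_add: "pm_linear3 F \<Longrightarrow> F (x + y) = F x + F y" unfolding pm_linear3_def by blast
lemma pm_linear3_smult: "pm_linear3 F \<Longrightarrow> F (smult3 c x) = smult3 c (F x)" unfolding pm_linear3_def by blast
lemma pm_linear3_I: "(\<And>x y. F (x + y) = F x + F y) \<Longrightarrow> (\<And>c x. F (smult3 c x) = smult3 c (F x)) \<Longrightarrow> pm_linear3 F"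
  unfolding pm_linear3_def by blast
lemma pm_linear3_comp: "pm_linear3 F \<Longrightarrow> pm_linear3 G \<Longrightarrow> pm_linear3 (\<lambda>m. F (G m))"
  by (rule pm_linear3_I) (simp_all add: pm_linear3_add pm_linear3_smult)
lemma pm_linear3_zero: "pm_linear3 F \<Longrightarrow> F 0 = 0"
  using pm_linear3_smult[of F 0 0] by simp
lemma pm_linear3_sum: "pm_linear3 F \<Longrightarrow> F (sum g A) = (\<Sum>a\<in>A. F (g a))"
  by (induction A rule: infinite_finite_induct) (auto simp: pm_linear3_add pm_linear3_zero)

definition one_tensor :: "('j multiset \<Rightarrow>\<^sub>0 'k::field) \<Rightarrow> ('j multiset \<Rightarrow>\<^sub>0 ('j multiset \<Rightarrow>\<^sub>0 'k))" where
  "one_tensor v = Poly_Mapping.map (\<lambda>c. smult c (basis_vec {#})) v"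

lemma lookup_one_tensor[simp]: "lookup (one_tensor v) t = smult (lookup v t) (basis_vec {#})"
  by (simp add: one_tensor_def lookup_map_zero_preserving)

lemma one_tensor_add: "one_tensor (v + w) = one_tensor v + one_tensor w"
  by (rule poly_mapping_eqI) (simp add: lookup_add smult_add_left)
lemma one_tensor_smult: "one_tensor (smult c v) = smult_nested c (one_tensor v)"
  by (rule poly_mapping_eqI) simp
lemma one_tensor_zero[simp]: "one_tensor 0 = 0"
  by (rule poly_mapping_eqI) simp

definition map_left :: "(('j multiset \<Rightarrow>\<^sub>0 'k::field) \<Rightarrow> ('j multiset \<Rightarrow>\<^sub>0 'k)) \<Rightarrow> ('j multiset \<Rightarrow>\<^sub>0 ('j multiset \<Rightarrow>\<^sub>0 'k)) \<Rightarrow> ('j multiset \<Rightarrow>\<^sub>0 ('j multiset \<Rightarrow>\<^sub>0 'k))" where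
  "map_left f F = Poly_Mapping.map f F"

lemma lookup_map_left: "pm_linear f \<Longrightarrow> lookup (map_left f F) t = f (lookup F t)"
  by (simp add: map_left_def lookup_map_zero_preserving pm_linear_zero)

lemma map_left_add: "pm_linear f \<Longrightarrow> map_left f (F + G) = map_left f F + map_left f G"
  by (rule poly_mapping_eqI) (simp add: lookup_map_left lookup_add pm_linear_add)
lemma map_left_smult: "pm_linear f \<Longrightarrow> map_left f (smult_nested c F) = smult_nested c (map_left f F)"
  by (rule poly_mapping_eqI) (simp add: lookup_map_left pm_linear_smult)
lemma map_left_zero[simp]: "pm_linear f \<Longrightarrow> map_left f 0 = 0"
  by (rule poly_mapping_eqI) (simp add: lookup_map_left pm_linear_zero)

locale lie_algebra_k = lie_algebra br for br :: "('j::linorder,'k::field) lie \<Rightarrow> ('j,'k) lie \<Rightarrow> ('j,'k) lie" +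
  fixes k :: 'k
  assumes k_nonzero: "k \<noteq> 0"
begin

definition br_scaled where "br_scaled x y = smult (inverse k) (br x y)"

lemma is_lie_bracket_br_scaled: "is_lie_bracket br_scaled"
  unfolding is_lie_bracket_def br_scaled_def lsmult_eq_smult
  by (simp add: br_add_left br_add_right br_smult_left br_smult_right br_self smult_add mult.commute
      flip: smult_add, simp add: br_jacobi)

sublocale scaled: lie_algebra br_scaled by (unfold_locales) (rule is_lie_bracket_br_scaled)

abbreviation "rep_scaled \<equiv> rep br_scaled"

definition act_q :: "('j,'k) mod3 \<Rightarrow> ('j,'k) mod3" where
  "act_q m = (fst m, 0, 0)"

definition act_lie :: "('j,'k) lie \<Rightarrow> ('j,'k) mod3 \<Rightarrow> ('j,'k) mod3" where
  "act_lie x m = (rep_scaled x (fst m), rep br x (fst (snd m)), map_left (rep br x) (snd (snd m)) + one_tensor (rep_scaled x (fst m)))"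

lemma pm_linear3_act_q: "pm_linear3 act_q"
  by (simp add: pm_linear3_def act_q_def smult3_def zero_prod_def)

lemma pm_linear3_act_lie: "pm_linear3 (act_lie x)"
  unfolding pm_linear3_def act_lie_def
  by (simp add: smult3_def pm_linear_add[OF pm_linear_rep] pm_linear_smult[OF pm_linear_rep] map_left_add[OF pm_linear_rep] map_left_smult[OF pm_linear_rep]
      one_tensor_add one_tensor_smult smult_nested_add)

fun act_word :: "'j option list \<Rightarrow> ('j,'k) mod3 \<Rightarrow> ('j,'k) mod3" where
  "act_word [] m = m"
| "act_word (None # w) m = act_q (act_word w m)"
| "act_word (Some j # w) m = act_lie (basis_vec j) (act_word w m)"

lemma pm_linear3_act_word: "pm_linear3 (act_word w)"
proof (induction w)
  case Nil
  have "act_word [] = (\<lambda>m. m)" by (rule ext) simp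
  then show ?case by (simp add: pm_linear3_I)
next
  case (Cons a w)
  show ?case
  proof (cases a)
    case None
    have "act_word (None # w) = (\<lambda>m. act_q (act_word w m))" by (rule ext) simp
    then show ?thesis using None pm_linear3_comp[OF pm_linear3_act_q Cons.IH] by simp
  next
    case (Some j)
    have "act_word (Some j # w) = (\<lambda>m. act_lie (basis_vec j) (act_word w m))" by (rule ext) simp
    then show ?thesis using Some pm_linear3_comp[OF pm_linear3_act_lie Cons.IH] by simp
  qed
qed

lemma act_word_append: "act_word (u @ v) m = act_word u (act_word v m)"
proof (induction u)
  case (Cons a u) then show ?case by (cases a) simp_all
qed simp

definition act_tens :: "('j,'k) tens \<Rightarrow> ('j,'k) mod3 \<Rightarrow> ('j,'k) mod3" where
  "act_tens f m = (\<Sum>w\<in>keys f. smult3 (lookup f w) (act_word w m))"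

lemma act_tens_superset: "finite A \<Longrightarrow> keys f \<subseteq> A \<Longrightarrow> act_tens f m = (\<Sum>w\<in>A. smult3 (lookup f w) (act_word w m))"
  unfolding act_tens_def by (rule sum.mono_neutral_left) (auto simp: in_keys_iff)

lemma act_tens_add: "act_tens (f + g) m = act_tens f m + act_tens g m"
proof -
  let ?A = "keys f \<union> keys g"
  have "act_tens (f + g) m = (\<Sum>w\<in>?A. smult3 (lookup (f+g) w) (act_word w m))"
    by (rule act_tens_superset) (auto simp: keys_add)
  also have "\<dots> = (\<Sum>w\<in>?A. smult3 (lookup f w) (act_word w m)) + (\<Sum>w\<in>?A. smult3 (lookup g w) (act_word w m))"
    by (simp add: lookup_add smult3_add_left sum.distrib)
  also have "\<dots> = act_tens f m + act_tens g m"
    by (simp add: act_tens_superset[of ?A f] act_tens_superset[of ?A g])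
  finally show ?thesis .
qed

lemma act_tens_smult: "act_tens (smult c f) m = smult3 c (act_tens f m)"
  by (subst act_tens_superset[OF finite_keys keys_smult]) (simp add: act_tens_def smult3_sum)

lemma act_tens_zero[simp]: "act_tens 0 m = 0"
  by (simp add: act_tens_def)
lemma act_tens_neg: "act_tens (- f) m = - act_tens f m"
  using act_tens_smult[of "-1" f m] by (simp add: smult_minus_one smult3_minus_one)
lemma act_tens_diff: "act_tens (f - g) m = act_tens f m - act_tens g m"
  using act_tens_add[of f "- g" m] act_tens_neg[of g m] by simp
lemma act_tens_sum: "act_tens (sum f A) m = (\<Sum>a\<in>A. act_tens (f a) m)"
  by (induction A rule: infinite_finite_induct) (auto simp: act_tens_add)

lemma act_tens_wd[simp]: "act_tens (wd w) m = act_word w m"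
  by (simp add: act_tens_def wd_def)

lemma act_tens_lin_ext: "act_tens (lin_ext h g) m = (\<Sum>v\<in>keys g. smult3 (lookup g v) (act_tens (h v) m))"
  by (simp add: lin_ext_def act_tens_sum act_tens_smult)

lemma pm_linear3_act_tens: "pm_linear3 (act_tens f)"
  unfolding pm_linear3_def act_tens_def
  by (simp add: pm_linear3_add[OF pm_linear3_act_word] pm_linear3_smult[OF pm_linear3_act_word] smult3_add sum.distrib smult3_sum mult.commute)

lemma act_tens_wd_mult: "act_tens (wd u \<star> g) m = act_word u (act_tens g m)"
proof -
  have "wd u \<star> g = lin_ext (\<lambda>v. wd (u @ v)) g"
    by (simp add: tmult_lin_ext' wd_def)
  then have "act_tens (wd u \<star> g) m = (\<Sum>v\<in>keys g. smult3 (lookup g v) (act_word u (act_word v m)))"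
    by (simp add: act_tens_lin_ext act_word_append)
  also have "\<dots> = act_word u (act_tens g m)"
    by (simp add: act_tens_def pm_linear3_sum[OF pm_linear3_act_word] pm_linear3_smult[OF pm_linear3_act_word])
  finally show ?thesis .
qed

lemma act_tens_mult: "act_tens (f \<star> g) m = act_tens f (act_tens g m)"
proof -
  have "f \<star> g = lin_ext (\<lambda>u. wd u \<star> g) f"
    using pm_linear_comp_lin_ext[OF pm_linear_tmult_left[of g], of wd f] unfolding lin_ext_wd[of f] .
  then have "act_tens (f \<star> g) m = (\<Sum>u\<in>keys f. smult3 (lookup f u) (act_word u (act_tens g m)))"
    by (simp add: act_tens_lin_ext act_tens_wd_mult)
  then show ?thesis by (simp only: act_tens_def[of f])
qed

lemma act_tens_qt[simp]: "act_tens qt m = act_q m"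
  by (simp add: qt_def)

lemma act_lie_add_left: "act_lie (x + y) m = act_lie x m + act_lie y m"
  unfolding act_lie_def
  by (simp add: rep_add_left, rule poly_mapping_eqI,
      simp add: lookup_add lookup_map_left[OF pm_linear_rep] rep_add_left one_tensor_add algebra_simps)

lemma act_lie_smult_left: "act_lie (smult c x) m = smult3 c (act_lie x m)"
  unfolding act_lie_def
  by (simp add: rep_smult_left, rule poly_mapping_eqI,
      simp add: lookup_add lookup_map_left[OF pm_linear_rep] rep_smult_left one_tensor_smult smult_add)

lemma act_lie_zero_left: "act_lie 0 m = 0"
  using act_lie_smult_left[of 0 0 m] by simp

lemma act_lie_sum_left: "act_lie (sum f A) m = (\<Sum>a\<in>A. act_lie (f a) m)"
  by (induction A rule: infinite_finite_induct) (auto simp: act_lie_add_left act_lie_zero_left)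

lemma act_tens_emb: "act_tens (emb x) m = act_lie x m"
proof -
  have "act_tens (emb x) m = (\<Sum>j\<in>keys x. smult3 (lookup x j) (act_lie (basis_vec j) m))"
    by (simp add: emb_lin_ext act_tens_lin_ext)
  also have "\<dots> = act_lie (\<Sum>j\<in>keys x. smult (lookup x j) (basis_vec j)) m"
    by (simp only: act_lie_sum_left act_lie_smult_left)
  also have "\<dots> = act_lie x m"
    using sum_basis_expansion[of x] by simp
  finally show ?thesis .
qed

lemma fst_act_q[simp]: "fst (act_q m) = fst m" by (simp add: act_q_def)
lemma fst_act_lie[simp]: "fst (act_lie x m) = rep_scaled x (fst m)" by (simp add: act_lie_def)

lemma fst_act_word: "fst m = fst m' \<Longrightarrow> fst (act_word w m) = fst (act_word w m')"
proof (induction w)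
  case (Cons a w) then show ?case by (cases a) simp_all
qed simp

lemma fst_smult3[simp]: "fst (smult3 c m) = smult c (fst m)" by (simp add: smult3_def)

lemma fst_act_tens: "fst m = fst m' \<Longrightarrow> fst (act_tens f m) = fst (act_tens f m')"
  by (simp add: act_tens_def fst_sum fst_act_word[of m m'])

lemma act_tens_gen_I: "g \<in> gens_I \<Longrightarrow> act_tens g m = 0"
proof -
  assume "g \<in> gens_I"
  then consider "g = qt \<star> qt - qt" | a where "g = qt \<star> a \<star> qt - qt \<star> a"
    unfolding gens_I_def by blast
  then show ?thesis
  proof cases
    case 1 then show ?thesis by (simp add: act_tens_diff act_tens_mult act_q_def)
  next
    case 2
    have "fst (act_tens a (act_q m)) = fst (act_tens a m)" by (rule fst_act_tens) simp
    then show ?thesis using 2 by (simp add: act_tens_diff act_tens_mult act_q_def)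
  qed
qed

lemma rep_commutator_br: "rep br x (rep br y v) = rep br y (rep br x v) + rep br (br x y) v"
  using rep_commutator[of x y v] by (simp add: diff_eq_eq add.commute)

lemma rep_commutator_br_scaled: "rep_scaled x (rep_scaled y v) = rep_scaled y (rep_scaled x v) + smult (inverse k) (rep_scaled (br x y) v)"
  using scaled.rep_commutator[of x y v] by (simp add: diff_eq_eq add.commute br_scaled_def rep_smult_left)

lemma generator_R_third_component:
  "map_left (rep br (br x y)) F + one_tensor (rep_scaled (br x y) a)
    - (map_left (rep br x) (map_left (rep br y) F + one_tensor (rep_scaled y a)) + one_tensor (rep_scaled x (rep_scaled y a)))
    + (map_left (rep br y) (map_left (rep br x) F + one_tensor (rep_scaled x a)) + one_tensor (rep_scaled y (rep_scaled x a)))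
    + (map_left (rep br x) (one_tensor (rep_scaled y a)) + one_tensor (rep_scaled x (rep_scaled y a)))
    - (map_left (rep br y) (one_tensor (rep_scaled x a)) + one_tensor (rep_scaled y (rep_scaled x a)))
    - smult_nested k (one_tensor (rep_scaled x (rep_scaled y a))) + smult_nested k (one_tensor (rep_scaled y (rep_scaled x a))) = 0"
  (is "?lhs = 0")
proof (rule poly_mapping_eqI)
  fix t
  have "rep_scaled (br x y) a = smult k (rep_scaled x (rep_scaled y a)) - smult k (rep_scaled y (rep_scaled x a))"
    by (simp add: rep_commutator_br_scaled[of x y a] smult_add k_nonzero)
  then have "lookup (rep_scaled (br x y) a) t = k * lookup (rep_scaled x (rep_scaled y a)) t - k * lookup (rep_scaled y (rep_scaled x a)) t"
    by (simp add: lookup_minus)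
  then show "lookup ?lhs t = lookup 0 t"
    by (simp add: lookup_add lookup_minus lookup_map_left[OF pm_linear_rep] pm_linear_add[OF pm_linear_rep]
        rep_commutator_br[of x y] smult_diff_left[symmetric] smult_add_left[symmetric] algebra_simps
        del: smult_single)
qed

lemma act_tens_gen_R: "g \<in> gens_R br k \<Longrightarrow> act_tens g m = 0"
proof -
  assume "g \<in> gens_R br k"
  then obtain x y where g: "g = emb (br x y) - emb x \<star> emb y + emb y \<star> emb x
                  + emb x \<star> emb y \<star> qt - emb y \<star> emb x \<star> qt
                  - tsmult k (emb x \<star> qt \<star> emb y) + tsmult k (emb y \<star> qt \<star> emb x)"
    unfolding gens_R_def by blast
  obtain a b F where m: "m = (a, b, F)" by (cases m)
  have "act_tens g m = act_lie (br x y) m - act_lie x (act_lie y m) + act_lie y (act_lie x m)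
     + act_lie x (act_lie y (act_q m)) - act_lie y (act_lie x (act_q m))
     - smult3 k (act_lie x (act_q (act_lie y m))) + smult3 k (act_lie y (act_q (act_lie x m)))"
    by (simp add: g act_tens_add act_tens_diff act_tens_smult tsmult_eq_smult act_tens_mult act_tens_emb)
  also have "\<dots> = 0"
  proof -
    have "rep_scaled (br x y) a - rep_scaled x (rep_scaled y a) + rep_scaled y (rep_scaled x a) + rep_scaled x (rep_scaled y a) - rep_scaled y (rep_scaled x a)
       - smult k (rep_scaled x (rep_scaled y a)) + smult k (rep_scaled y (rep_scaled x a)) = 0"
      by (simp add: rep_commutator_br_scaled[of x y a] smult_add k_nonzero)
    moreover have "rep br (br x y) b - rep br x (rep br y b) + rep br y (rep br x b) = 0"
      by (simp add: rep_commutator_br[of x y b])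
    ultimately show ?thesis
      using generator_R_third_component[of x y F a]
      by (simp add: m act_lie_def act_q_def pm_linear_zero[OF pm_linear_rep] map_left_zero[OF pm_linear_rep]
          prod_eq_iff smult3_def algebra_simps)
  qed
  finally show ?thesis .
qed

lemma act_tens_ideal: "f \<in> ideal_U br k \<Longrightarrow> act_tens f m = 0"
  unfolding ideal_U_def
proof (induction arbitrary: m rule: ideal_gen.induct)
  case zero then show ?case by simp
next
  case (gen g a b)
  have "act_tens g (act_tens b m) = 0" using gen act_tens_gen_I act_tens_gen_R by blast
  then show ?case by (simp add: act_tens_mult pm_linear3_zero[OF pm_linear3_act_tens])
next
  case (add f h) then show ?case by (simp add: act_tens_add)
qed

end

section \<open>Words in \<open>x\<^sub>j\<close> and \<open>q\<close>\<close>

fun letters :: "'j option list \<Rightarrow> 'j list" where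
  "letters [] = []" | "letters (None # w) = letters w" | "letters (Some j # w) = j # letters w"
fun q_count :: "'j option list \<Rightarrow> nat" where
  "q_count [] = 0" | "q_count (None # w) = Suc (q_count w)" | "q_count (Some j # w) = q_count w"
fun q_pos :: "'j option list \<Rightarrow> nat" where
  "q_pos [] = 0" | "q_pos (None # w) = 0" | "q_pos (Some j # w) = Suc (q_pos w)"
fun inversions :: "'j::linorder list \<Rightarrow> nat" where
  "inversions [] = 0" | "inversions (x # l) = length (filter (\<lambda>y. y < x) l) + inversions l"

lemma letters_append[simp]: "letters (a @ b) = letters a @ letters b"
  by (induction a rule: letters.induct) auto
lemma q_count_append[simp]: "q_count (a @ b) = q_count a + q_count b"
  by (induction a rule: q_count.induct) auto
lemma letters_map[simp]: "letters (map Some u) = u"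
  by (induction u) auto
lemma q_count_map[simp]: "q_count (map Some u) = 0"
  by (induction u) auto
lemma q_pos_map_app[simp]: "q_pos (map Some u @ t) = length u + q_pos t"
  by (induction u) auto

lemma inversions_swap: "y < x \<Longrightarrow> inversions (a @ x # y # b) = Suc (inversions (a @ y # x # b))"
proof (induction a)
  case Nil then show ?case by simp
next
  case (Cons c a)
  have "length (filter (\<lambda>y. y < c) (a @ x # y # b)) = length (filter (\<lambda>y. y < c) (a @ y # x # b))"
    by simp
  then show ?case using Cons by simp
qed

lemma q_count_pos_iff: "q_count w > 0 \<longleftrightarrow> None \<in> set w"
  by (induction w rule: q_count.induct) auto

lemma q_count_ge_2D: "q_count w \<ge> 2 \<Longrightarrow> \<exists>P t. w = P @ None # t \<and> None \<in> set P"
proof (induction w rule: q_count.induct)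
  case 1 then show ?case by simp
next
  case (2 w)
  then have "None \<in> set w" using q_count_pos_iff[of w] by simp
  then obtain a b where "w = a @ None # b" by (meson split_list)
  then have "None # w = (None # a) @ None # b \<and> None \<in> set (None # a)" by simp
  then show ?case by blast
next
  case (3 j w)
  then obtain P t where "w = P @ None # t \<and> None \<in> set P" by auto
  then have "Some j # w = (Some j # P) @ None # t \<and> None \<in> set (Some j # P)" by simp
  then show ?case by blast
qed

lemma q_count_eq_0D: "q_count w = 0 \<Longrightarrow> w = map Some (letters w)"
  by (induction w rule: letters.induct) auto

lemma q_count_eq_1D: "q_count w = 1 \<Longrightarrow> \<exists>p s. w = map Some p @ None # map Some s"
proof (induction w rule: letters.induct)
  case 1 then show ?case by simp
next
  case (2 w)
  then have "None # w = map Some [] @ None # map Some (letters w)" using q_count_eq_0D[of w] by simp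
  then show ?case by blast
next
  case (3 j w)
  then obtain p s where "w = map Some p @ None # map Some s" by auto
  then have "Some j # w = map Some (j # p) @ None # map Some s" by simp
  then show ?case by blast
qed

lemma unsorted_adjacent_descent: "\<not> sorted (u :: 'j::linorder list) \<Longrightarrow> \<exists>a x y b. u = a @ x # y # b \<and> y < x"
proof (induction u)
  case Nil then show ?case by simp
next
  case (Cons c u)
  show ?case
  proof (cases "sorted u")
    case True
    then have "u \<noteq> []" and "c > hd u" using Cons.prems
      by (cases u; auto)+
    then have "c # u = [] @ c # hd u # tl u" by simp
    with \<open>c > hd u\<close> show ?thesis by blast
  next
    case False
    then obtain a x y b where "u = a @ x # y # b \<and> y < x" using Cons.IH by blast
    then have "c # u = (c # a) @ x # y # b \<and> y < x" by simp
    then show ?thesis by blast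
  qed
qed

section \<open>Linear independence of the PBW cosets\<close>

lemma sorted_mset_eq: "sorted u \<Longrightarrow> sorted v \<Longrightarrow> mset u = mset v \<Longrightarrow> u = v"
  by (metis properties_for_sort)

lemma pbw_words_cases:
  assumes "w \<in> pbw_words"
  obtains (q_first) v where "sorted v" "w = None # map Some v"
    | (q_middle) u j v where "sorted u" "sorted (j # v)" "w = map Some u @ [Some j, None] @ map Some v"
    | (q_free) u where "sorted u" "w = map Some u"
  using assms unfolding pbw_words_def by blast

lemma lookup_eq_zero_if_detected:
  fixes g :: "'a \<Rightarrow>\<^sub>0 'k::field"
  assumes "(\<Sum>w\<in>keys g. lookup g w * \<phi> w) = 0"
    and "\<phi> w0 = 1" and "\<And>w. w \<in> keys g \<Longrightarrow> w \<noteq> w0 \<Longrightarrow> \<phi> w = 0"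
  shows "lookup g w0 = 0"
proof (cases "w0 \<in> keys g")
  case True
  then have "(\<Sum>w\<in>keys g. lookup g w * \<phi> w) = lookup g w0 * \<phi> w0"
    using assms(3) by (simp add: sum.remove sum.neutral)
  then show ?thesis using assms(1,2) by simp
qed (simp add: in_keys_iff)

lemma hd_map_Some_append_Some: "hd (map Some u @ Some j # t) \<noteq> None"
  by (cases u) auto

context lie_algebra_k
begin

definition base_point :: "('j,'k) mod3" where "base_point = (basis_vec {#}, basis_vec {#}, 0)"

lemma lookup_components_act_tens:
  "lookup (fst (act_tens g m)) s = (\<Sum>w\<in>keys g. lookup g w * lookup (fst (act_word w m)) s)"
  "lookup (fst (snd (act_tens g m))) s = (\<Sum>w\<in>keys g. lookup g w * lookup (fst (snd (act_word w m))) s)"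
  "lookup (lookup (snd (snd (act_tens g m))) t) s
     = (\<Sum>w\<in>keys g. lookup g w * lookup (lookup (snd (snd (act_word w m))) t) s)"
  by (simp_all add: act_tens_def fst_sum snd_sum lookup_sum smult3_def)

lemma act_word_sorted_base_point:
  "sorted u \<Longrightarrow> fst (act_word (map Some u) base_point) = basis_vec (mset u)
    \<and> fst (snd (act_word (map Some u) base_point)) = basis_vec (mset u)"
proof (induction u)
  case Nil then show ?case by (simp add: base_point_def)
next
  case (Cons x u)
  then have "sorted u" and min: "\<forall>y\<in>#mset u. x \<le> y" by auto
  then show ?case
    using Cons.IH rho_basic[OF min, of br] rho_basic[OF min, of br_scaled] by (simp add: act_lie_def)
qed

lemma act_word_q_first_base_point:
  "sorted v \<Longrightarrow> act_word (None # map Some v) base_point = (basis_vec (mset v), 0, 0)"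
  using act_word_sorted_base_point[of v] by (simp add: act_q_def)

lemma act_word_q_middle_base_point:
  assumes "sorted (j # v)"
  shows "act_word (map Some u @ [Some j, None] @ map Some v) base_point
    = act_word (map Some u) (basis_vec (mset (j # v)), 0, one_tensor (basis_vec (mset (j # v))))"
proof -
  have min: "\<forall>y\<in>#mset v. j \<le> y" and sorted: "sorted v" using assms by auto
  have "act_word (None # map Some v) base_point = (basis_vec (mset v), 0, 0)"
    by (rule act_word_q_first_base_point[OF sorted])
  then show ?thesis
    using rho_basic[OF min, of br_scaled]
    by (simp add: act_word_append act_lie_def pm_linear_zero[OF pm_linear_rep] map_left_zero[OF pm_linear_rep])
qed

lemma act_word_sorted_one_tensor:
  "sorted u \<Longrightarrow> fst (snd (act_word (map Some u) (basis_vec w, 0, one_tensor (basis_vec w)))) = 0 \<and>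
    (\<forall>t. keys (lookup (snd (snd (act_word (map Some u) (basis_vec w, 0, one_tensor (basis_vec w))))) t
                 - (if t = w then basis_vec (mset u) else 0)) \<subseteq> {s. size s < length u})"
proof (induction u)
  case Nil
  show ?case by (simp add: lookup_single when_def)
next
  case (Cons x u)
  then have min: "\<forall>y\<in>#mset u. x \<le> y" by simp
  obtain A B F where S: "act_word (map Some u) (basis_vec w, 0, one_tensor (basis_vec w)) = (A, B, F)"
    by (cases "act_word (map Some u) (basis_vec w, 0, one_tensor (basis_vec w))")
  have B: "B = 0" and D: "\<And>t. keys (lookup F t - (if t = w then basis_vec (mset u) else 0)) \<subseteq> {s. size s < length u}"
    using Cons S by auto
  have new: "act_word (map Some (x # u)) (basis_vec w, 0, one_tensor (basis_vec w))
      = (rep br_scaled (basis_vec x) A, 0, map_left (rep br (basis_vec x)) F + one_tensor (rep br_scaled (basis_vec x) A))"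
    using S B by (simp add: act_lie_def pm_linear_zero[OF pm_linear_rep])
  have "keys (lookup (map_left (rep br (basis_vec x)) F + one_tensor (rep br_scaled (basis_vec x) A)) t
      - (if t = w then basis_vec (mset (x # u)) else 0)) \<subseteq> {s. size s < length (x # u)}" for t
  proof -
    let ?E = "(if t = w then basis_vec (mset u) else 0) :: _ \<Rightarrow>\<^sub>0 'k"
    have "rep br (basis_vec x) ?E = (if t = w then basis_vec (mset (x # u)) else 0)"
      using rho_basic[OF min, of br] by (simp add: pm_linear_zero[OF pm_linear_rep] pm_linear_zero[OF pm_linear_rep_basis])
    then have eq: "lookup (map_left (rep br (basis_vec x)) F + one_tensor (rep br_scaled (basis_vec x) A)) t
        - (if t = w then basis_vec (mset (x # u)) else 0)
        = rep br (basis_vec x) (lookup F t - ?E) + smult (lookup (rep br_scaled (basis_vec x) A) t) (basis_vec {#})"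
      by (simp add: lookup_add lookup_map_left[OF pm_linear_rep] pm_linear_diff[OF pm_linear_rep] del: rep_basis_vec)
    have "keys (rep br (basis_vec x) (lookup F t - ?E)) \<subseteq> {s. size s < length (x # u)}"
      using keys_rep_less[OF D[of t], of br "basis_vec x"] by simp
    moreover have "keys (smult (lookup (rep br_scaled (basis_vec x) A) t) (basis_vec {#}) :: _ \<Rightarrow>\<^sub>0 'k)
        \<subseteq> {s. size s < length (x # u)}"
      using keys_smult[of "lookup (rep br_scaled (basis_vec x) A) t" "basis_vec {#} :: _ \<Rightarrow>\<^sub>0 'k"] by auto
    ultimately show ?thesis unfolding eq by (rule keys_add_subset)
  qed
  then show ?case using new by simp
qed

lemma lookup_third_q_middle:
  assumes "sorted u" and "sorted (j # v)" and "length u \<le> size s"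
  shows "lookup (lookup (snd (snd (act_word (map Some u @ [Some j, None] @ map Some v) base_point))) t) s
     = (if t = mset (j # v) \<and> s = mset u then 1 else 0)"
proof -
  let ?F = "snd (snd (act_word (map Some u @ [Some j, None] @ map Some v) base_point))"
  let ?E = "(if t = mset (j # v) then basis_vec (mset u) else 0) :: _ \<Rightarrow>\<^sub>0 'k"
  have "keys (lookup ?F t - ?E) \<subseteq> {s. size s < length u}"
    using act_word_sorted_one_tensor[OF assms(1), of "mset (j # v)"] act_word_q_middle_base_point[OF assms(2)]
    by simp
  then have "lookup (lookup ?F t - ?E) s = 0" using assms(3) by (auto simp: in_keys_iff)
  then show ?thesis by (auto simp: lookup_minus lookup_single when_def)
qed

lemma second_component_pbw_word:
  assumes "w \<in> pbw_words"
  shows "fst (snd (act_word w base_point)) = (if None \<in> set w then 0 else basis_vec (mset (map the w)))"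
  using assms
proof (cases rule: pbw_words_cases)
  case (q_first v) then show ?thesis by (simp add: act_q_def)
next
  case (q_middle u j v)
  then show ?thesis
    using act_word_sorted_one_tensor[OF q_middle(1)] act_word_q_middle_base_point[OF q_middle(2)] by simp
next
  case (q_free u) then show ?thesis using act_word_sorted_base_point[of u] by (simp add: comp_def)
qed

lemma pbw_coefficients_q_free:
  assumes zero: "act_tens g base_point = 0" and pbw: "keys g \<subseteq> pbw_words" and w: "w \<in> keys g"
  shows "None \<in> set w"
proof (rule ccontr)
  assume no_q: "None \<notin> set w"
  from subsetD[OF pbw w] no_q obtain u where u: "sorted u" "w = map Some u"
    by (cases rule: pbw_words_cases) auto
  have "lookup g w = 0"
  proof (rule lookup_eq_zero_if_detected)
    show "(\<Sum>w'\<in>keys g. lookup g w' * lookup (fst (snd (act_word w' base_point))) (mset u)) = 0"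
      using lookup_components_act_tens(2)[of g base_point "mset u"] zero by simp
    show "lookup (fst (snd (act_word w base_point))) (mset u) = 1"
      using second_component_pbw_word[OF subsetD[OF pbw w]] u by (simp add: comp_def lookup_single)
    fix w' assume w': "w' \<in> keys g" "w' \<noteq> w"
    show "lookup (fst (snd (act_word w' base_point))) (mset u) = 0"
    proof (cases "None \<in> set w'")
      case False
      from subsetD[OF pbw w'(1)] False obtain u' where "sorted u'" "w' = map Some u'"
        by (cases rule: pbw_words_cases) auto
      then show ?thesis
        using second_component_pbw_word[OF subsetD[OF pbw w'(1)]] w' u sorted_mset_eq[of u' u]
        by (auto simp: comp_def lookup_single when_def)
    qed (use second_component_pbw_word[OF subsetD[OF pbw w'(1)]] in auto)
  qed
  with w show False by (simp add: in_keys_iff)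
qed

lemma pbw_coefficients_q_middle:
  assumes zero: "act_tens g base_point = 0" and pbw: "keys g \<subseteq> pbw_words"
    and has_q: "\<And>w. w \<in> keys g \<Longrightarrow> None \<in> set w"
  shows "\<forall>w\<in>keys g. hd w = None"
proof (rule ccontr)
  let ?K = "{w \<in> keys g. hd w \<noteq> None}"
  assume "\<not> (\<forall>w\<in>keys g. hd w = None)"
  then have "q_pos ` ?K \<noteq> {}" by auto
  then have "Max (q_pos ` ?K) \<in> q_pos ` ?K" by (intro Max_in) simp_all
  then obtain w0 where w0: "w0 \<in> ?K" and w0_max: "q_pos w0 = Max (q_pos ` ?K)"
    by (metis (no_types, lifting) imageE)
  have max: "q_pos w \<le> q_pos w0" if "w \<in> ?K" for w
    using Max_ge[of "q_pos ` ?K"] that w0_max by simp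
  have middle: "\<exists>u j v. sorted u \<and> sorted (j # v) \<and> w = map Some u @ [Some j, None] @ map Some v"
    if "w \<in> ?K" for w
    using subsetD[OF pbw, of w] that has_q[of w] by (cases rule: pbw_words_cases) auto
  obtain u0 j0 v0 where u0: "sorted u0" "sorted (j0 # v0)" "w0 = map Some u0 @ [Some j0, None] @ map Some v0"
    using middle[OF w0] by blast
  let ?\<phi> = "\<lambda>w. lookup (lookup (snd (snd (act_word w base_point))) (mset (j0 # v0))) (mset u0)"
  have "lookup g w0 = 0"
  proof (rule lookup_eq_zero_if_detected)
    show "(\<Sum>w\<in>keys g. lookup g w * ?\<phi> w) = 0"
      using lookup_components_act_tens(3)[of g base_point "mset (j0 # v0)" "mset u0"] zero by simp
    show "?\<phi> w0 = 1"
      using lookup_third_q_middle[OF u0(1,2)] u0(3) by simp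
    fix w assume w: "w \<in> keys g" "w \<noteq> w0"
    show "?\<phi> w = 0"
    proof (cases "hd w = None")
      case True
      from subsetD[OF pbw w(1)] True has_q[OF w(1)] obtain v where "w = None # map Some v"
        by (cases rule: pbw_words_cases) (auto simp: hd_map_Some_append_Some)
      then show ?thesis by (simp add: act_q_def)
    next
      case False
      then obtain u j v where u: "sorted u" "sorted (j # v)" "w = map Some u @ [Some j, None] @ map Some v"
        using middle w by blast
      have "length u \<le> size (mset u0)" using max[of w] w False u(3) u0(3) by simp
      then have "?\<phi> w = (if mset (j0 # v0) = mset (j # v) \<and> mset u0 = mset u then 1 else 0)"
        using lookup_third_q_middle[OF u(1,2)] u(3) by (simp del: mset.simps)
      moreover have "\<not> (mset (j0 # v0) = mset (j # v) \<and> mset u0 = mset u)"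
      proof
        assume "mset (j0 # v0) = mset (j # v) \<and> mset u0 = mset u"
        then have "j0 # v0 = j # v" "u0 = u"
          using sorted_mset_eq[OF u0(2) u(2)] sorted_mset_eq[OF u0(1) u(1)] by blast+
        then show False using w u(3) u0(3) by simp
      qed
      ultimately show ?thesis by (simp del: mset.simps)
    qed
  qed
  with w0 show False by (simp add: in_keys_iff)
qed

lemma pbw_coefficients_q_first:
  assumes zero: "act_tens g base_point = 0" and pbw: "keys g \<subseteq> pbw_words"
    and q_first: "\<And>w. w \<in> keys g \<Longrightarrow> hd w = None \<and> None \<in> set w"
  shows "g = 0"
proof -
  have first: "\<exists>v. sorted v \<and> w = None # map Some v" if "w \<in> keys g" for w
    using subsetD[OF pbw that] q_first[OF that] by (cases rule: pbw_words_cases) (auto simp: hd_map_Some_append_Some)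
  have "lookup g w0 = 0" if w0: "w0 \<in> keys g" for w0
  proof -
    obtain v0 where v0: "sorted v0" "w0 = None # map Some v0" using first[OF w0] by blast
    show ?thesis
    proof (rule lookup_eq_zero_if_detected)
      show "(\<Sum>w\<in>keys g. lookup g w * lookup (fst (act_word w base_point)) (mset v0)) = 0"
        using lookup_components_act_tens(1)[of g base_point "mset v0"] zero by simp
      show "lookup (fst (act_word w0 base_point)) (mset v0) = 1"
        using act_word_q_first_base_point[OF v0(1)] v0(2) by (simp del: act_word.simps)
      fix w assume w: "w \<in> keys g" "w \<noteq> w0"
      then obtain v where "sorted v" "w = None # map Some v" using first by blast
      then show "lookup (fst (act_word w base_point)) (mset v0) = 0"
        using act_word_q_first_base_point w v0 sorted_mset_eq[of v v0]
        by (auto simp: lookup_single when_def simp del: act_word.simps)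
    qed
  qed
  then show ?thesis by (intro poly_mapping_eqI) (metis in_keys_iff lookup_zero)
qed

theorem pbw_independent:
  assumes "g \<in> ideal_U br k" and pbw: "keys g \<subseteq> pbw_words"
  shows "g = 0"
proof -
  have zero: "act_tens g base_point = 0" using act_tens_ideal[OF assms(1)] .
  have "\<And>w. w \<in> keys g \<Longrightarrow> None \<in> set w" by (rule pbw_coefficients_q_free[OF zero pbw])
  moreover from this have "\<forall>w\<in>keys g. hd w = None" by (rule pbw_coefficients_q_middle[OF zero pbw])
  ultimately show ?thesis by (intro pbw_coefficients_q_first[OF zero pbw]) auto
qed

end

section \<open>The PBW cosets span\<close>

lemma ideal_U_add: "f \<in> ideal_U br k \<Longrightarrow> h \<in> ideal_U br k \<Longrightarrow> f + h \<in> ideal_U br k"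
  unfolding ideal_U_def by (rule ideal_gen.add)
lemma ideal_U_diff: "f \<in> ideal_U br k \<Longrightarrow> h \<in> ideal_U br k \<Longrightarrow> f - h \<in> ideal_U br k"
  unfolding ideal_U_def by (rule ideal_gen_diff)
lemma ideal_U_smult: "f \<in> ideal_U br k \<Longrightarrow> smult c f \<in> ideal_U br k"
  unfolding ideal_U_def by (rule ideal_gen_smult)

lemma wd_tmult_emb_tmult_wd: "wd a \<star> emb v \<star> wd b = lin_ext (\<lambda>j. wd (a @ [Some j] @ b)) v"
proof -
  have "wd a \<star> emb v = lin_ext (\<lambda>j. wd a \<star> wd [Some j]) v"
    unfolding emb_lin_ext by (rule pm_linear_comp_lin_ext[OF pm_linear_tmult_right])
  then show ?thesis
    using pm_linear_comp_lin_ext[OF pm_linear_tmult_left[of "wd b"], of "\<lambda>j. wd a \<star> wd [Some j]" v] by simp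
qed

text \<open>The defining relation of \<open>R\<close> for \<open>x = x\<^sub>i\<close>, \<open>y = x\<^sub>j\<close>, read as a rewriting rule for the
  word \<open>P x\<^sub>i x\<^sub>j S\<close>.\<close>

lemma swap_relation:
  fixes br :: "('j,'k::field) lie \<Rightarrow> ('j,'k) lie \<Rightarrow> ('j,'k) lie"
  shows "wd (P @ [Some i, Some j] @ S)
    - (wd P \<star> emb (br_basis br i j) \<star> wd S + wd (P @ [Some j, Some i] @ S)
       + wd (P @ [Some i, Some j, None] @ S) - wd (P @ [Some j, Some i, None] @ S)
       - smult k (wd (P @ [Some i, None, Some j] @ S)) + smult k (wd (P @ [Some j, None, Some i] @ S)))
   \<in> ideal_U br k"
proof -
  let ?x = "basis_vec i" and ?y = "basis_vec j"
  let ?g = "emb (br ?x ?y) - emb ?x \<star> emb ?y + emb ?y \<star> emb ?x + emb ?x \<star> emb ?y \<star> qt - emb ?y \<star> emb ?x \<star> qt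
      - tsmult k (emb ?x \<star> qt \<star> emb ?y) + tsmult k (emb ?y \<star> qt \<star> emb ?x)"
  have "?g \<in> gens_R br k" unfolding gens_R_def by blast
  then have "wd P \<star> ?g \<star> wd S \<in> ideal_U br k"
    unfolding ideal_U_def by (intro ideal_gen.gen) blast
  moreover have emb_letter: "emb (basis_vec l) = (wd [Some l] :: ('j,'k) tens)" for l
    by (simp add: emb_lin_ext wd_def)
  ultimately have "wd P \<star> emb (br_basis br i j) \<star> wd S - wd (P @ [Some i, Some j] @ S) + wd (P @ [Some j, Some i] @ S)
      + wd (P @ [Some i, Some j, None] @ S) - wd (P @ [Some j, Some i, None] @ S)
      - smult k (wd (P @ [Some i, None, Some j] @ S)) + smult k (wd (P @ [Some j, None, Some i] @ S)) \<in> ideal_U br k"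
    by (simp add: emb_letter br_basis_def qt_def tsmult_eq_smult tmult_add_left tmult_add_right tmult_diff_left
        tmult_diff_right tmult_smult_left tmult_smult_right tmult_assoc del: smult_single)
  from ideal_U_smult[OF this, of "-1"] show ?thesis by (simp add: smult_minus_one algebra_simps)
qed

lemma q_deletion: "None \<in> set P \<Longrightarrow> wd (P @ None # t) - wd (P @ t) \<in> ideal_U br k"
proof -
  assume "None \<in> set P"
  then obtain P1 P2 where P: "P = P1 @ None # P2" by (meson split_list)
  have "qt \<star> wd P2 \<star> qt - qt \<star> wd P2 \<in> gens_I" unfolding gens_I_def by blast
  then have "wd P1 \<star> (qt \<star> wd P2 \<star> qt - qt \<star> wd P2) \<star> wd t \<in> ideal_U br k"
    unfolding ideal_U_def by (intro ideal_gen.gen) blast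
  then show ?thesis using P by (simp add: qt_def tmult_diff_left tmult_diff_right tmult_assoc)
qed

lemma swap_relation_q_absorbed:
  assumes "wd (P @ [Some x, Some y, None] @ S) - wd (P @ [Some x, Some y] @ S) \<in> ideal_U br k"
    and "wd (P @ [Some y, Some x, None] @ S) - wd (P @ [Some y, Some x] @ S) \<in> ideal_U br k"
    and "wd (P @ [Some x, None, Some y] @ S) - X \<in> ideal_U br k"
    and "wd (P @ [Some y, None, Some x] @ S) - Y \<in> ideal_U br k"
  shows "smult k X - (wd P \<star> emb (br_basis br x y) \<star> wd S + smult k Y) \<in> ideal_U br k"
proof -
  let ?X = "wd (P @ [Some x, Some y] @ S)" and ?Y = "wd (P @ [Some y, Some x] @ S)"
  let ?M1 = "wd (P @ [Some x, Some y, None] @ S)" and ?M2 = "wd (P @ [Some y, Some x, None] @ S)"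
  let ?M3 = "wd (P @ [Some x, None, Some y] @ S)" and ?M4 = "wd (P @ [Some y, None, Some x] @ S)"
  let ?low = "wd P \<star> emb (br_basis br x y) \<star> wd S"
  have "smult k X - (?low + smult k Y)
      = (?X - (?low + ?Y + ?M1 - ?M2 - smult k ?M3 + smult k ?M4)) + (?M1 - ?X) - (?M2 - ?Y)
        - smult k (?M3 - X) + smult k (?M4 - Y)"
    by (simp add: algebra_simps smult_diff)
  also have "\<dots> \<in> ideal_U br k"
    by (intro ideal_U_add ideal_U_diff ideal_U_smult swap_relation assms)
  finally show ?thesis .
qed

context lie_algebra_k
begin

definition pbw_spanned :: "('j,'k) tens \<Rightarrow> bool" where
  "pbw_spanned f \<longleftrightarrow> (\<exists>g. keys g \<subseteq> pbw_words \<and> f - g \<in> ideal_U br k)"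

lemma pbw_spanned_zero: "pbw_spanned 0"
  unfolding pbw_spanned_def ideal_U_def by (intro exI[of _ 0]) (simp add: ideal_gen.zero)

lemma pbw_spanned_add: "pbw_spanned f \<Longrightarrow> pbw_spanned h \<Longrightarrow> pbw_spanned (f + h)"
proof -
  assume "pbw_spanned f" "pbw_spanned h"
  then obtain g g' where g: "keys g \<subseteq> pbw_words" "f - g \<in> ideal_U br k"
    and g': "keys g' \<subseteq> pbw_words" "h - g' \<in> ideal_U br k"
    unfolding pbw_spanned_def by blast
  have "f + h - (g + g') \<in> ideal_U br k" using ideal_U_add[OF g(2) g'(2)] by (simp add: algebra_simps)
  with keys_add_subset[OF g(1) g'(1)] show ?thesis unfolding pbw_spanned_def by blast
qed

lemma pbw_spanned_smult: "pbw_spanned f \<Longrightarrow> pbw_spanned (smult c f)"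
proof -
  assume "pbw_spanned f"
  then obtain g where g: "keys g \<subseteq> pbw_words" "f - g \<in> ideal_U br k" unfolding pbw_spanned_def by blast
  then have "smult c f - smult c g \<in> ideal_U br k" using ideal_U_smult[OF g(2), of c] by (simp add: smult_diff)
  with keys_smult_subset[OF g(1)] show ?thesis unfolding pbw_spanned_def by blast
qed

lemma pbw_spanned_cong: "f - h \<in> ideal_U br k \<Longrightarrow> pbw_spanned h \<Longrightarrow> pbw_spanned f"
proof -
  assume fh: "f - h \<in> ideal_U br k" and "pbw_spanned h"
  then obtain g where g: "keys g \<subseteq> pbw_words" "h - g \<in> ideal_U br k" unfolding pbw_spanned_def by blast
  have "f - g \<in> ideal_U br k" using ideal_U_add[OF fh g(2)] by (simp add: algebra_simps)
  with g(1) show ?thesis unfolding pbw_spanned_def by blast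
qed

lemma pbw_spanned_diff: "pbw_spanned f \<Longrightarrow> pbw_spanned h \<Longrightarrow> pbw_spanned (f - h)"
  using pbw_spanned_add[of f "smult (-1) h"] pbw_spanned_smult[of h "-1"] by (simp add: smult_minus_one)

lemma pbw_spanned_smult_cancel: "pbw_spanned (smult k f) \<Longrightarrow> pbw_spanned f"
  using pbw_spanned_smult[of "smult k f" "inverse k"] k_nonzero by simp

lemma pbw_spanned_wd: "w \<in> pbw_words \<Longrightarrow> pbw_spanned (wd w)"
  unfolding pbw_spanned_def ideal_U_def by (intro exI[of _ "wd w"]) (simp add: wd_def ideal_gen.zero)

lemma pbw_spanned_sum: "(\<And>i. i \<in> A \<Longrightarrow> pbw_spanned (f i)) \<Longrightarrow> pbw_spanned (sum f A)"
  by (induction A rule: infinite_finite_induct) (auto simp: pbw_spanned_add pbw_spanned_zero)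

lemma pbw_spanned_lin_ext_wd: "(\<And>w. w \<in> keys f \<Longrightarrow> pbw_spanned (g w)) \<Longrightarrow> pbw_spanned (lin_ext g f)"
  unfolding lin_ext_def by (intro pbw_spanned_sum pbw_spanned_smult)

lemma pbw_spanned_wd_emb_wd:
  "(\<And>j. pbw_spanned (wd (a @ [Some j] @ b))) \<Longrightarrow> pbw_spanned (wd a \<star> emb v \<star> wd b)"
  unfolding wd_tmult_emb_tmult_wd by (rule pbw_spanned_lin_ext_wd)

lemma pbw_spanned_insert_q: "None \<in> set P \<Longrightarrow> pbw_spanned (wd (P @ t)) \<Longrightarrow> pbw_spanned (wd (P @ None # t))"
  by (rule pbw_spanned_cong[OF q_deletion])

lemma pbw_spanned_swap:
  assumes "pbw_spanned (wd (A @ [Some y, Some x] @ B))"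
    and "pbw_spanned (wd (A @ [Some x, Some y, None] @ B))" "pbw_spanned (wd (A @ [Some y, Some x, None] @ B))"
    and "pbw_spanned (wd (A @ [Some x, None, Some y] @ B))" "pbw_spanned (wd (A @ [Some y, None, Some x] @ B))"
    and "\<And>j. pbw_spanned (wd (A @ [Some j] @ B))"
  shows "pbw_spanned (wd (A @ [Some x, Some y] @ B))"
  by (rule pbw_spanned_cong[OF swap_relation])
    (intro pbw_spanned_add pbw_spanned_diff pbw_spanned_smult pbw_spanned_wd_emb_wd assms)

lemma pbw_spanned_swap_q_absorbed:
  assumes "wd (P @ [Some x, Some y, None] @ S) - wd (P @ [Some x, Some y] @ S) \<in> ideal_U br k"
    and "wd (P @ [Some y, Some x, None] @ S) - wd (P @ [Some y, Some x] @ S) \<in> ideal_U br k"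
    and "wd (P @ [Some x, None, Some y] @ S) - X \<in> ideal_U br k"
    and "wd (P @ [Some y, None, Some x] @ S) - Y \<in> ideal_U br k"
    and "pbw_spanned Y" and "\<And>j. pbw_spanned (wd (P @ [Some j] @ S))"
  shows "pbw_spanned X"
proof (rule pbw_spanned_smult_cancel)
  show "pbw_spanned (smult k X)"
    by (rule pbw_spanned_cong[OF swap_relation_q_absorbed[OF assms(1-4)]])
      (intro pbw_spanned_add pbw_spanned_smult pbw_spanned_wd_emb_wd assms(5,6))
qed

lemma pbw_spanned_swap_after_q:
  assumes "None \<in> set P"
    and "pbw_spanned (wd (P @ [Some y, Some x] @ S))" and "\<And>j. pbw_spanned (wd (P @ [Some j] @ S))"
  shows "pbw_spanned (wd (P @ [Some x, Some y] @ S))"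
proof (rule pbw_spanned_swap_q_absorbed[OF _ _ _ _ assms(2,3)])
  show "wd (P @ [Some x, Some y, None] @ S) - wd (P @ [Some x, Some y] @ S) \<in> ideal_U br k"
    using q_deletion[of "P @ [Some x, Some y]" S] assms(1) by simp
  show "wd (P @ [Some y, Some x, None] @ S) - wd (P @ [Some y, Some x] @ S) \<in> ideal_U br k"
    using q_deletion[of "P @ [Some y, Some x]" S] assms(1) by simp
  show "wd (P @ [Some x, None, Some y] @ S) - wd (P @ [Some x, Some y] @ S) \<in> ideal_U br k"
    using q_deletion[of "P @ [Some x]" "Some y # S"] assms(1) by simp
  show "wd (P @ [Some y, None, Some x] @ S) - wd (P @ [Some y, Some x] @ S) \<in> ideal_U br k"
    using q_deletion[of "P @ [Some y]" "Some x # S"] assms(1) by simp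
qed

lemma pbw_spanned_swap_around_q:
  assumes "pbw_spanned (wd (A @ [Some y, None, Some x] @ S))"
    and "\<And>j. pbw_spanned (wd (A @ [Some j] @ None # S))"
  shows "pbw_spanned (wd (A @ [Some x, None, Some y] @ S))"
proof (rule pbw_spanned_swap_q_absorbed[where P = A and S = "None # S", OF _ _ _ _ assms(1)])
  show "wd (A @ [Some x, Some y, None] @ None # S) - wd (A @ [Some x, Some y] @ None # S) \<in> ideal_U br k"
    using q_deletion[of "A @ [Some x, Some y, None]" S] by simp
  show "wd (A @ [Some y, Some x, None] @ None # S) - wd (A @ [Some y, Some x] @ None # S) \<in> ideal_U br k"
    using q_deletion[of "A @ [Some y, Some x, None]" S] by simp
  show "wd (A @ [Some x, None, Some y] @ None # S) - wd (A @ [Some x, None, Some y] @ S) \<in> ideal_U br k"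
    using q_deletion[of "A @ [Some x, None, Some y]" S] by simp
  show "wd (A @ [Some y, None, Some x] @ None # S) - wd (A @ [Some y, None, Some x] @ S) \<in> ideal_U br k"
    using q_deletion[of "A @ [Some y, None, Some x]" S] by simp
  show "pbw_spanned (wd (A @ [Some j] @ None # S))" for j by (rule assms(2))
qed

end

text \<open>Rewriting with the relations terminates: the bracket term has fewer letters, the \<open>q\<close>-terms
  arising from a \<open>q\<close>-free word are ranked below all \<open>q\<close>-free words of the same length, and
  otherwise the number of \<open>q\<close>'s, the position of the first \<open>q\<close> and the inversions decrease.\<close>

definition reduction_rel :: "('j::linorder option list \<times> 'j option list) set" where
  "reduction_rel = inv_image (less_than <*lex*> less_than <*lex*> less_than <*lex*> less_than <*lex*> less_than)
     (\<lambda>w. (length (letters w), if q_count w = 0 then 1 else 0, q_count w, q_pos w, inversions (letters w)))"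

lemma wf_reduction_rel: "wf reduction_rel"
  unfolding reduction_rel_def by (intro wf_inv_image wf_lex_prod wf_less_than)

lemma reduction_fewer_letters: "length (letters w') < length (letters w) \<Longrightarrow> (w', w) \<in> reduction_rel"
  by (simp add: reduction_rel_def)
lemma reduction_q_free_to_q:
  "length (letters w') = length (letters w) \<Longrightarrow> q_count w' > 0 \<Longrightarrow> q_count w = 0 \<Longrightarrow> (w', w) \<in> reduction_rel"
  by (simp add: reduction_rel_def)
lemma reduction_fewer_q:
  "length (letters w') = length (letters w) \<Longrightarrow> q_count w' > 0 \<Longrightarrow> q_count w' < q_count w \<Longrightarrow> (w', w) \<in> reduction_rel"
  by (simp add: reduction_rel_def)
lemma reduction_earlier_q:
  "length (letters w') = length (letters w) \<Longrightarrow> q_count w' = q_count w \<Longrightarrow> q_pos w' < q_pos w \<Longrightarrow> (w', w) \<in> reduction_rel"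
  by (simp add: reduction_rel_def)
lemma reduction_fewer_inversions:
  "length (letters w') = length (letters w) \<Longrightarrow> q_count w' = q_count w \<Longrightarrow> q_pos w' = q_pos w
    \<Longrightarrow> inversions (letters w') < inversions (letters w) \<Longrightarrow> (w', w) \<in> reduction_rel"
  by (simp add: reduction_rel_def)

lemma q_pos_append: "None \<in> set t \<Longrightarrow> q_pos (t @ r) = q_pos t"
  by (induction t rule: q_pos.induct) auto

context lie_algebra_k
begin

lemma pbw_spanned_two_q:
  assumes smaller: "\<And>w'. (w', w) \<in> reduction_rel \<Longrightarrow> pbw_spanned (wd w')" and "q_count w \<ge> 2"
  shows "pbw_spanned (wd w)"
proof -
  obtain P t where w: "w = P @ None # t" and P: "None \<in> set P" using q_count_ge_2D[OF assms(2)] by blast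
  have "pbw_spanned (wd (P @ t))"
    by (rule smaller, rule reduction_fewer_q) (use w P q_count_pos_iff[of P] in auto)
  then show ?thesis unfolding w by (rule pbw_spanned_insert_q[OF P])
qed

lemma pbw_spanned_q_free:
  assumes smaller: "\<And>w'. (w', w) \<in> reduction_rel \<Longrightarrow> pbw_spanned (wd w')" and "q_count w = 0"
  shows "pbw_spanned (wd w)"
proof (cases "sorted (letters w)")
  case True
  then have "w \<in> pbw_words" using q_count_eq_0D[OF assms(2)] unfolding pbw_words_def by blast
  then show ?thesis by (rule pbw_spanned_wd)
next
  case False
  obtain a x y b where u: "letters w = a @ x # y # b" and xy: "y < x"
    using unsorted_adjacent_descent[OF False] by blast
  have w: "w = map Some a @ [Some x, Some y] @ map Some b" using q_count_eq_0D[OF assms(2)] u by simp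
  show ?thesis unfolding w
  proof (rule pbw_spanned_swap; rule smaller)
    show "(map Some a @ [Some y, Some x] @ map Some b, w) \<in> reduction_rel"
      by (rule reduction_fewer_inversions) (use w inversions_swap[OF xy, of a b] in auto)
    show "(map Some a @ [Some j] @ map Some b, w) \<in> reduction_rel" for j
      by (rule reduction_fewer_letters) (use w in auto)
  qed (rule reduction_q_free_to_q; use w in simp)+
qed

lemma pbw_spanned_descent_after_q:
  assumes smaller: "\<And>w'. (w', w) \<in> reduction_rel \<Longrightarrow> pbw_spanned (wd w')"
    and w: "w = map Some p @ None # map Some s" and "\<not> sorted s"
  shows "pbw_spanned (wd w)"
proof -
  obtain a x y b where s: "s = a @ x # y # b" and xy: "y < x"
    using unsorted_adjacent_descent[OF assms(3)] by blast
  let ?P = "map Some p @ None # map Some a"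
  have w': "w = ?P @ [Some x, Some y] @ map Some b" using w s by simp
  show ?thesis unfolding w'
  proof (rule pbw_spanned_swap_after_q; (rule smaller)?)
    show "(?P @ [Some y, Some x] @ map Some b, w) \<in> reduction_rel"
      by (rule reduction_fewer_inversions) (use w' inversions_swap[OF xy, of "p @ a" b] in auto)
    show "(?P @ [Some j] @ map Some b, w) \<in> reduction_rel" for j
      by (rule reduction_fewer_letters) (use w' in auto)
  qed simp
qed

lemma pbw_spanned_descent_before_q:
  assumes smaller: "\<And>w'. (w', w) \<in> reduction_rel \<Longrightarrow> pbw_spanned (wd w')"
    and w: "w = map Some (p0 @ [z]) @ None # map Some s" and "\<not> sorted p0"
  shows "pbw_spanned (wd w)"
proof -
  obtain a x y b where p0: "p0 = a @ x # y # b" and xy: "y < x"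
    using unsorted_adjacent_descent[OF assms(3)] by blast
  let ?A = "map Some a" and ?T1 = "map Some (b @ [z])" and ?T2 = "map Some s"
  have w': "w = ?A @ [Some x, Some y] @ ?T1 @ None # ?T2" using w p0 by simp
  have q_term: "pbw_spanned (wd (?A @ t @ ?T1 @ None # ?T2))"
    if "length (letters t) = 2" and "q_count t = 1" and "q_pos t \<le> 2" for t
  proof -
    have "None \<in> set t" using that(2) q_count_pos_iff[of t] by simp
    moreover have "pbw_spanned (wd ((?A @ t @ ?T1) @ ?T2))"
      by (rule smaller, rule reduction_earlier_q) (use that w' \<open>None \<in> set t\<close> in \<open>auto simp: q_pos_append\<close>)
    ultimately show ?thesis using pbw_spanned_insert_q[of "?A @ t @ ?T1" ?T2] by simp
  qed
  show ?thesis unfolding w'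
  proof (rule pbw_spanned_swap)
    show "pbw_spanned (wd (?A @ [Some y, Some x] @ ?T1 @ None # ?T2))"
      by (rule smaller, rule reduction_fewer_inversions)
        (use w' inversions_swap[OF xy, of a "b @ z # s"] in auto)
    show "pbw_spanned (wd (?A @ [Some j] @ ?T1 @ None # ?T2))" for j
      by (rule smaller, rule reduction_fewer_letters) (use w' in auto)
  qed (rule q_term; simp)+
qed

lemma pbw_spanned_descent_at_q:
  assumes smaller: "\<And>w'. (w', w) \<in> reduction_rel \<Longrightarrow> pbw_spanned (wd w')"
    and w: "w = map Some p0 @ [Some z, None, Some y] @ map Some s" and "y < z"
  shows "pbw_spanned (wd w)"
  unfolding w
proof (rule pbw_spanned_swap_around_q; rule smaller)
  show "(map Some p0 @ [Some y, None, Some z] @ map Some s, w) \<in> reduction_rel"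
    by (rule reduction_fewer_inversions) (use w inversions_swap[OF assms(3), of p0 s] in auto)
  show "(map Some p0 @ [Some j] @ None # map Some s, w) \<in> reduction_rel" for j
    by (rule reduction_fewer_letters) (use w in auto)
qed

lemma pbw_spanned_one_q:
  assumes smaller: "\<And>w'. (w', w) \<in> reduction_rel \<Longrightarrow> pbw_spanned (wd w')" and "q_count w = 1"
  shows "pbw_spanned (wd w)"
proof -
  obtain p s where w: "w = map Some p @ None # map Some s" using q_count_eq_1D[OF assms(2)] by blast
  show ?thesis
  proof (cases "sorted s")
    case False show ?thesis by (rule pbw_spanned_descent_after_q[OF smaller w False])
  next
    case s_sorted: True
    show ?thesis
    proof (cases p rule: rev_cases)
      case Nil
      then have "w \<in> pbw_words" using w s_sorted unfolding pbw_words_def by auto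
      then show ?thesis by (rule pbw_spanned_wd)
    next
      case (snoc p0 z)
      consider "\<not> sorted p0" | y s' where "s = y # s'" "y < z" | "sorted p0" "sorted (z # s)"
        using s_sorted by (cases s) (auto, metis not_less order_trans)
      then show ?thesis
      proof cases
        case 1 then show ?thesis using w snoc by (intro pbw_spanned_descent_before_q[OF smaller]) simp_all
      next
        case 2 then show ?thesis using w snoc by (intro pbw_spanned_descent_at_q[OF smaller]) simp_all
      next
        case 3
        moreover have "w = map Some p0 @ [Some z, None] @ map Some s" using w snoc by simp
        ultimately have "w \<in> pbw_words" unfolding pbw_words_def by blast
        then show ?thesis by (rule pbw_spanned_wd)
      qed
    qed
  qed
qed

lemma pbw_spanned_all_words: "pbw_spanned (wd w)"
proof (induction w rule: wf_induct[OF wf_reduction_rel])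
  case (1 w)
  consider "q_count w = 0" | "q_count w = 1" | "q_count w \<ge> 2" by linarith
  then show ?case
    by cases (use 1 pbw_spanned_q_free pbw_spanned_one_q pbw_spanned_two_q in blast)+
qed

theorem pbw_spanning: "\<exists>g. keys g \<subseteq> pbw_words \<and> f - g \<in> ideal_U br k"
proof -
  have "pbw_spanned (lin_ext wd f)"
    by (rule pbw_spanned_lin_ext_wd) (rule pbw_spanned_all_words)
  then show ?thesis unfolding lin_ext_wd pbw_spanned_def .
qed

end

lemma (in lie_algebra_k) cosets_basis_pbw_words: "cosets_basis (ideal_U br k) pbw_words"
  unfolding cosets_basis_def tsmult_eq_smult
proof (intro conjI allI impI)
  fix f :: "('j,'k) tens"
  obtain g where g: "keys g \<subseteq> pbw_words" "f - g \<in> ideal_U br k" using pbw_spanning by blast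
  moreover have "(\<Sum>w\<in>keys g. smult (lookup g w) (wd w)) = g"
    using lin_ext_wd[of g] by (simp add: lin_ext_def)
  ultimately show "\<exists>S c. finite S \<and> S \<subseteq> pbw_words \<and> f - (\<Sum>w\<in>S. smult (c w) (wd w)) \<in> ideal_U br k"
    by (metis finite_keys)
next
  fix S c
  assume S: "finite S \<and> S \<subseteq> pbw_words \<and> (\<Sum>w\<in>S. smult (c w) (wd w)) \<in> ideal_U br k"
  have "keys (\<Sum>w\<in>S. smult (c w) (wd w)) \<subseteq> S"
    by (rule keys_sum_subset) (auto simp: wd_def dest: subsetD[OF keys_smult])
  then have "(\<Sum>w\<in>S. smult (c w) (basis_vec w)) = 0"
    using S pbw_independent unfolding wd_def by blast
  then show "\<forall>w\<in>S. c w = 0"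
    using sum_smult_basis_vec_lookup[of S _ c] S by (metis lookup_zero)
qed

theorem proposition3p2:
  fixes br :: "('j::linorder,'k::field) lie \<Rightarrow> ('j,'k) lie \<Rightarrow> ('j,'k) lie"
    and k :: 'k
  assumes "is_lie_bracket br"
    and "k \<noteq> 0"
  shows "cosets_basis (ideal_U br k) (pbw_words :: 'j option list set)"
proof -
  interpret lie_algebra_k br k by unfold_locales (fact assms)+
  show ?thesis by (rule cosets_basis_pbw_words)
qed

end
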